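(* Let $2\le r_1<r_2$ be integers and $n$ such that $h_0:=n-5-2(r_1+r_2)\ge2$. Let $T^*=[h_0,2,2]$ and $T_*=[2,2,h_0]$, both in $\mathfrak{F}(n)$, and let $\alpha([h,q_1,q_2])=[h-1,q_1+1,q_2]$ and $\gamma([h,q_1,q_2])=[h-1,q_1,q_2+1]$ (defined for $h\ge3$). Then: (a) the ordered sequence $\mathcal{A}=\{T^*,\alpha(T^* ),\dots,\alpha^{h_0-2}(T^* ),\gamma(T^* ),\alpha(\gamma(T^* )),\dots,\alpha^{h_0-3}(\gamma(T^* )),\dots,\gamma^{h_0-2}(T^* )=T_*\}$, i.e. the trees $\alpha^k(\gamma^j(T^* ))$ for $0\le j\le h_0-2$, $0\le k\le h_0-2-j$, listed in lexicographic order of $(j,k)$, consists of exactly the elements of $\mathfrak{F}(n)$; (b) the sequence $\mathcal{A}$ is ordered decreasingly with respect to the inverse lexicographic order $\succ$, defined by $[x,y,z]\succ[x',y',z']$ if and only if $z'>z$, or $z'=z$ and $y'>y$; (c) for $[x,y,z],[x',y',z']\in\mathfrak{F}(n)$, if $[x,y,z]\succ[x',y',z']$ then $\rho([x,y,z])>\rho([x',y',z'])$; (d) the maximum (resp. minimum) spectral radius over $\mathfrak{F}(n)$ is $\rho(T^* )$ (resp. $\rho(T_* )$).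
   Context: $\rho(G)$ denotes the spectral radius (largest eigenvalue of the adjacency matrix) of a graph $G$. For integers $h,q_1,q_2\ge 2$ and fixed integers $2\le r_1<r_2$, the tree $[h,q_1,q_2]$ is constructed as follows: take a vertex $u$; attach to $u$ a pendant path with $h$ edges; attach to $u$ a path with $q_1$ edges ending at a vertex $v_1$, and attach to $v_1$ exactly $r_1$ pendant paths with $2$ edges each; attach to $u$ a path with $q_2$ edges ending at a vertex $v_2$, and attach to $v_2$ exactly $r_2$ pendant paths with $2$ edges each. It has $n=1+h+q_1+q_2+2(r_1+r_2)$ vertices. $\mathfrak{F}(n)$ is the set of all such trees $[h,q_1,q_2]$ with $h,q_1,q_2\ge2$ and $h+q_1+q_2=n-1-2(r_1+r_2)$. *)

theory Defs
  imports Main "Jordan_Normal_Form.Spectral_Radius"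
begin

definition path_edges :: "nat \<Rightarrow> nat \<Rightarrow> nat \<Rightarrow> (nat \<times> nat) set" where
  "path_edges a s k = (if 0 < k then {(a, s)} else {}) \<union> {(s + i, s + i + 1) | i. i + 1 < k}"

definition tree_order :: "nat \<Rightarrow> nat \<Rightarrow> nat \<times> nat \<times> nat \<Rightarrow> nat" where
  "tree_order r1 r2 t = (case t of (h, q1, q2) \<Rightarrow> 1 + h + q1 + q2 + 2 * (r1 + r2))"

text \<open>Edge set of the tree [h,q1,q2] on vertices 0..n-1: u = 0, pendant path on 1..h,
  path to v1 = h+q1 on h+1..h+q1, path to v2 = h+q1+q2 on h+q1+1..h+q1+q2,
  then r1 pendant paths of length 2 at v1 and r2 pendant paths of length 2 at v2.\<close>
definition tree_edges :: "nat \<Rightarrow> nat \<Rightarrow> nat \<times> nat \<times> nat \<Rightarrow> (nat \<times> nat) set" where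
  "tree_edges r1 r2 t = (case t of (h, q1, q2) \<Rightarrow>
     let v1 = h + q1; v2 = h + q1 + q2; b = h + q1 + q2 + 1 in
       path_edges 0 1 h \<union> path_edges 0 (h + 1) q1 \<union> path_edges 0 (h + q1 + 1) q2
       \<union> (\<Union>i<r1. path_edges v1 (b + 2 * i) 2)
       \<union> (\<Union>i<r2. path_edges v2 (b + 2 * r1 + 2 * i) 2))"

definition tree_adj :: "nat \<Rightarrow> nat \<Rightarrow> nat \<times> nat \<times> nat \<Rightarrow> complex mat" where
  "tree_adj r1 r2 t = mat (tree_order r1 r2 t) (tree_order r1 r2 t)
     (\<lambda>(i, j). if (i, j) \<in> tree_edges r1 r2 t \<or> (j, i) \<in> tree_edges r1 r2 t then 1 else 0)"

definition rho :: "nat \<Rightarrow> nat \<Rightarrow> nat \<times> nat \<times> nat \<Rightarrow> real" where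
  "rho r1 r2 t = spectral_radius (tree_adj r1 r2 t)"

definition family :: "nat \<Rightarrow> nat \<Rightarrow> nat \<Rightarrow> (nat \<times> nat \<times> nat) set" where
  "family r1 r2 n = {(h, q1, q2). 2 \<le> h \<and> 2 \<le> q1 \<and> 2 \<le> q2 \<and>
      int h + int q1 + int q2 = int n - 1 - 2 * (int r1 + int r2)}"

definition alpha :: "nat \<times> nat \<times> nat \<Rightarrow> nat \<times> nat \<times> nat" where
  "alpha t = (case t of (h, q1, q2) \<Rightarrow> (h - 1, q1 + 1, q2))"

definition gamma :: "nat \<times> nat \<times> nat \<Rightarrow> nat \<times> nat \<times> nat" where
  "gamma t = (case t of (h, q1, q2) \<Rightarrow> (h - 1, q1, q2 + 1))"

definition inv_lex_succ :: "nat \<times> nat \<times> nat \<Rightarrow> nat \<times> nat \<times> nat \<Rightarrow> bool" where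
  "inv_lex_succ t t' = (case t of (x, y, z) \<Rightarrow> case t' of (x', y', z') \<Rightarrow>
      z' > z \<or> (z' = z \<and> y' > y))"

definition seqA :: "nat \<Rightarrow> (nat \<times> nat \<times> nat) list" where
  "seqA h0 = concat (map (\<lambda>j. map (\<lambda>k. (alpha ^^ k) ((gamma ^^ j) (h0, 2, 2))) [0..<h0 - 1 - j])
                          [0..<h0 - 1])"

end

theory Submission
  imports Defs
begin

text \<open>Root each tree \<open>[h, q\<^sub>1, q\<^sub>2]\<close> at \<open>v\<^sub>2\<close>. In a rooted tree the branch quotients
  \<open>D(\<lambda>, i) = \<lambda> - \<Sum>\<^sub>c 1 / D(\<lambda>, c)\<close> (sum over the children \<open>c\<close> of \<open>i\<close>) locate the spectral
  radius: if all non-root quotients are positive from \<open>a\<close> on and the root quotient is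
  non-positive at \<open>a\<close>, then it has a zero \<open>\<lambda> \<ge> a\<close>, which is an eigenvalue (with eigenvector
  \<open>x\<^sub>c = x\<^sub>p / D(\<lambda>, c)\<close>, \<open>p\<close> the parent of \<open>c\<close>), while a tree all of whose
  quotients are positive at \<open>\<lambda>\<close> has spectral radius below \<open>\<lambda>\<close>. For \<open>[h, q\<^sub>1, q\<^sub>2]\<close> every quotient is an iterate of
  \<open>x \<mapsto> \<lambda> - 1/x\<close>, and for \<open>\<lambda> \<ge> \<surd>(r\<^sub>2 + 2)\<close> the monotonicity of these iterates shows that
  \<open>\<alpha>\<close> and the step \<open>[2, m, q] \<mapsto> [m - 1, 2, q + 1]\<close> strictly increase the root quotient, hence
  strictly decrease \<open>\<rho>\<close>. Chaining the two steps orders \<open>\<FF>(n)\<close> by \<open>\<succ>\<close>, and \<open>T\<^sup>*\<close>, \<open>T\<^sub>*\<close> are its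
  extreme elements.\<close>

text \<open>\<open>inv_path_prod parent depth r d c\<close> is the product of \<open>1 / d\<close> over the path from \<open>c\<close> up to
  (excluding) the root \<open>r\<close>; the depth test only serves termination.\<close>
function inv_path_prod :: "(nat \<Rightarrow> nat) \<Rightarrow> (nat \<Rightarrow> nat) \<Rightarrow> nat \<Rightarrow> (nat \<Rightarrow> real) \<Rightarrow> nat \<Rightarrow> real"
where
  "inv_path_prod parent depth r d c =
     (if c = r \<or> \<not> depth (parent c) < depth c then 1
      else inv_path_prod parent depth r d (parent c) / d c)"
  by pat_completeness auto
termination by (relation "measure (\<lambda>(parent, depth, r, d, c). depth c)") auto

declare inv_path_prod.simps[simp del]

locale rooted_tree =
  fixes N r :: nat and parent depth :: "nat \<Rightarrow> nat"
  assumes root_less: "r < N"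
    and parent_less: "\<And>c. c < N \<Longrightarrow> c \<noteq> r \<Longrightarrow> parent c < N"
    and depth_parent_less: "\<And>c. c < N \<Longrightarrow> c \<noteq> r \<Longrightarrow> depth (parent c) < depth c"
begin

definition children :: "nat \<Rightarrow> nat set" where
  "children i = {c. c < N \<and> c \<noteq> r \<and> parent c = i}"

definition adjacent :: "nat \<Rightarrow> nat \<Rightarrow> bool" where
  "adjacent i j \<longleftrightarrow> (i \<noteq> r \<and> j = parent i) \<or> (j \<noteq> r \<and> i = parent j)"

definition adj_mat :: "complex mat" where
  "adj_mat = mat N N (\<lambda>(i, j). if adjacent i j then 1 else 0)"

text \<open>\<open>D l i\<close> plays the role of \<open>\<phi>(T\<^sub>i, l) / \<phi>(T\<^sub>i - i, l)\<close> for the branch \<open>T\<^sub>i\<close> of the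
  tree below \<open>i\<close>; the recursion is Schwenk's formula for characteristic polynomials.\<close>
definition branch_quotients :: "(real \<Rightarrow> nat \<Rightarrow> real) \<Rightarrow> bool" where
  "branch_quotients D \<longleftrightarrow> (\<forall>l i. i < N \<longrightarrow> D l i = l - (\<Sum>c\<in>children i. 1 / D l c))"

lemma mem_children: "c \<in> children i \<longleftrightarrow> c < N \<and> c \<noteq> r \<and> parent c = i"
  unfolding children_def by simp

lemma finite_children: "finite (children i)"
  unfolding children_def by auto

lemma card_children_le: "card (children i) \<le> N"
proof -
  have "children i \<subseteq> {..<N}" unfolding children_def by auto
  thus ?thesis using card_mono[of "{..<N}"] by fastforce
qed

lemma branch_quotientsD:
  "branch_quotients D \<Longrightarrow> i < N \<Longrightarrow> D l i = l - (\<Sum>c\<in>children i. 1 / D l c)"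
  unfolding branch_quotients_def by blast

lemma children_induct[consumes 1, case_names step]:
  assumes "i < N" and step: "\<And>i. i < N \<Longrightarrow> (\<And>c. c \<in> children i \<Longrightarrow> P c) \<Longrightarrow> P i"
  shows "P i"
proof -
  define K where "K = Max (depth ` {..<N})"
  have depth_le: "c < N \<Longrightarrow> depth c \<le> K" for c unfolding K_def by (intro Max_ge) auto
  have "\<forall>i. K - depth i = m \<longrightarrow> i < N \<longrightarrow> P i" for m
  proof (induction m rule: less_induct)
    case (less m)
    show ?case
    proof (intro allI impI)
      fix i assume m: "K - depth i = m" and i: "i < N"
      show "P i"
      proof (rule step[OF i])
        fix c assume "c \<in> children i"
        hence c: "c < N" "c \<noteq> r" "parent c = i" by (simp_all add: mem_children)
        hence "K - depth c < m" using depth_parent_less[of c] depth_le[of c] m by simp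
        thus "P c" using less c by blast
      qed
    qed
  qed
  thus ?thesis using assms(1) by blast
qed

lemma parent_induct[consumes 1, case_names root step]:
  assumes "c < N" and root: "P r"
    and step: "\<And>c. c < N \<Longrightarrow> c \<noteq> r \<Longrightarrow> P (parent c) \<Longrightarrow> P c"
  shows "P c"
proof -
  have "\<forall>c. depth c = m \<longrightarrow> c < N \<longrightarrow> P c" for m
  proof (induction m rule: less_induct)
    case (less m)
    show ?case
    proof (intro allI impI)
      fix c assume "depth c = m" "c < N"
      thus "P c"
        using root step less depth_parent_less[of c] parent_less[of c] by (cases "c = r") auto
    qed
  qed
  thus ?thesis using assms(1) by blast
qed

lemma adjacent_sym: "adjacent i j = adjacent j i"
  unfolding adjacent_def by auto

lemma parent_notin_children:
  assumes "i < N" "i \<noteq> r"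
  shows "parent i \<notin> children i"
proof
  assume "parent i \<in> children i"
  hence "parent (parent i) = i" "parent i < N" "parent i \<noteq> r" by (simp_all add: mem_children)
  thus False using depth_parent_less[OF assms] depth_parent_less[of "parent i"] by simp
qed

lemma sum_adjacent:
  fixes w :: "nat \<Rightarrow> 'a::comm_ring_1"
  assumes i: "i < N"
  shows "(\<Sum>j<N. (if adjacent i j then 1 else 0) * w j)
    = (if i = r then 0 else w (parent i)) + (\<Sum>c\<in>children i. w c)"
proof -
  have "(\<Sum>j<N. (if adjacent i j then 1 else 0) * w j)
      = (\<Sum>j<N. if j \<in> {j. adjacent i j} then w j else 0)"
    by (intro sum.cong) auto
  also have "\<dots> = sum w ({..<N} \<inter> {j. adjacent i j})"
    by (simp add: sum.inter_restrict)
  also have "{..<N} \<inter> {j. adjacent i j} = (if i = r then {} else {parent i}) \<union> children i"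
    using i parent_less unfolding adjacent_def children_def by auto
  also have "sum w \<dots> = (if i = r then 0 else w (parent i)) + (\<Sum>c\<in>children i. w c)"
    using parent_notin_children[OF i] finite_children by (cases "i = r") simp_all
  finally show ?thesis .
qed

lemma adj_mat_carrier: "adj_mat \<in> carrier_mat N N"
  unfolding adj_mat_def by simp

lemma adj_mat_mult_vec_nth:
  assumes "v \<in> carrier_vec N" and "i < N"
  shows "(adj_mat *\<^sub>v v) $ i = (\<Sum>j<N. (if adjacent i j then 1 else 0) * v $ j)"
  using assms unfolding adj_mat_def
  by (auto simp: scalar_prod_def row_def lessThan_atLeast0 intro!: sum.cong)

lemma adj_mat_mult_vec_nth_tree:
  assumes "v \<in> carrier_vec N" and "i < N"
  shows "(adj_mat *\<^sub>v v) $ i = (if i = r then 0 else v $ parent i) + (\<Sum>c\<in>children i. v $ c)"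
  unfolding adj_mat_mult_vec_nth[OF assms] by (rule sum_adjacent[OF assms(2)])

lemma eigenvector_eigenvalue_real:
  assumes ev: "adj_mat *\<^sub>v v = \<nu> \<cdot>\<^sub>v v" and v: "v \<in> carrier_vec N" and nz: "v \<noteq> 0\<^sub>v N"
  shows "Im \<nu> = 0"
proof -
  define a :: "nat \<Rightarrow> nat \<Rightarrow> complex" where "a i j = (if adjacent i j then 1 else 0)" for i j
  have ev_nth: "(\<Sum>j<N. a i j * v $ j) = \<nu> * v $ i" if "i < N" for i
    using arg_cong[OF ev, of "\<lambda>u. u $ i"] adj_mat_mult_vec_nth[OF v that] v that
    unfolding a_def by simp
  define Q where "Q = (\<Sum>i<N. cnj (v $ i) * (\<Sum>j<N. a i j * v $ j))"
  have "Q = (\<Sum>i<N. cnj (v $ i) * (\<nu> * v $ i))"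
    unfolding Q_def by (intro sum.cong) (simp_all add: ev_nth)
  also have "\<dots> = \<nu> * (\<Sum>i<N. cnj (v $ i) * v $ i)"
    by (simp add: sum_distrib_left mult_ac)
  also have "(\<Sum>i<N. cnj (v $ i) * v $ i) = of_real (\<Sum>i<N. (cmod (v $ i))\<^sup>2)"
    unfolding of_real_sum by (intro sum.cong) (simp_all only: complex_norm_square mult.commute)
  finally have Q: "Q = \<nu> * of_real (\<Sum>i<N. (cmod (v $ i))\<^sup>2)" .
  \<comment> \<open>\<open>Q\<close> is the Hermitian form of the real symmetric matrix, hence real.\<close>
  have "cnj (a i j) = a i j" for i j unfolding a_def by simp
  hence "cnj Q = (\<Sum>i<N. \<Sum>j<N. a i j * v $ i * cnj (v $ j))"
    unfolding Q_def by (simp add: sum_distrib_left mult_ac)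
  also have "\<dots> = (\<Sum>j<N. \<Sum>i<N. a i j * v $ i * cnj (v $ j))" by (rule sum.swap)
  also have "\<dots> = Q"
    unfolding Q_def by (simp add: sum_distrib_left mult_ac a_def adjacent_sym)
  finally have "cnj Q = Q" .
  hence "Im Q = 0" by (simp add: Reals_cnj_iff[symmetric] complex_is_Real_iff[symmetric])
  obtain k where k: "k < N" "v $ k \<noteq> 0"
    using nz v by (metis eq_vecI carrier_vecD index_zero_vec)
  have "0 < (cmod (v $ k))\<^sup>2" using k by simp
  also have "\<dots> \<le> (\<Sum>i<N. (cmod (v $ i))\<^sup>2)" by (rule member_le_sum) (use k in auto)
  finally show ?thesis using \<open>Im Q = 0\<close> unfolding Q by simp
qed

lemma sum_children_eq:
  fixes w D :: "nat \<Rightarrow> 'a::field"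
  assumes "\<And>c. c \<in> children i \<Longrightarrow> w i = D c * w c \<and> D c \<noteq> 0"
  shows "(\<Sum>c\<in>children i. w c) = w i * (\<Sum>c\<in>children i. 1 / D c)"
proof -
  have "(\<Sum>c\<in>children i. w c) = (\<Sum>c\<in>children i. w i / D c)"
    using assms by (intro sum.cong) (simp_all add: field_simps)
  thus ?thesis by (simp add: sum_distrib_left)
qed

lemma eigenvector_parent_entry:
  assumes D: "branch_quotients D"
    and ev: "adj_mat *\<^sub>v v = of_real \<mu> \<cdot>\<^sub>v v" and v: "v \<in> carrier_vec N"
    and nz: "\<And>i. i < N \<Longrightarrow> i \<noteq> r \<Longrightarrow> D \<mu> i \<noteq> 0"
    and c: "c < N" "c \<noteq> r"
  shows "v $ parent c = of_real (D \<mu> c) * v $ c"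
proof -
  have "c \<noteq> r \<longrightarrow> v $ parent c = of_real (D \<mu> c) * v $ c"
    using c(1)
  proof (induction rule: children_induct)
    case (step i)
    have "(\<Sum>c\<in>children i. v $ c) = v $ i * (\<Sum>c\<in>children i. 1 / of_real (D \<mu> c))"
      by (rule sum_children_eq) (use step.IH nz in \<open>auto simp: mem_children\<close>)
    also have "\<dots> = v $ i * of_real (\<mu> - D \<mu> i)"
      using branch_quotientsD[OF D step.hyps, of \<mu>] by (simp add: of_real_sum)
    finally have sum_eq: "(\<Sum>c\<in>children i. v $ c) = of_real \<mu> * v $ i - of_real (D \<mu> i) * v $ i"
      by (simp add: algebra_simps)
    have "(if i = r then 0 else v $ parent i) + (\<Sum>c\<in>children i. v $ c) = of_real \<mu> * v $ i"
      using arg_cong[OF ev, of "\<lambda>u. u $ i"] adj_mat_mult_vec_nth_tree[OF v step.hyps] v step.hyps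
      by simp
    thus ?case unfolding sum_eq by (simp add: algebra_simps split: if_split_asm)
  qed
  thus ?thesis using c by blast
qed

lemma root_quotient_zero_if_eigenvector:
  assumes D: "branch_quotients D"
    and ev: "adj_mat *\<^sub>v v = of_real \<mu> \<cdot>\<^sub>v v" and v: "v \<in> carrier_vec N" and v0: "v \<noteq> 0\<^sub>v N"
    and nz: "\<And>i. i < N \<Longrightarrow> i \<noteq> r \<Longrightarrow> D \<mu> i \<noteq> 0"
  shows "D \<mu> r = 0"
proof (rule ccontr)
  assume Dr: "D \<mu> r \<noteq> 0"
  note parent_entry = eigenvector_parent_entry[OF D ev v nz]
  have "(\<Sum>c\<in>children r. v $ c) = v $ r * (\<Sum>c\<in>children r. 1 / of_real (D \<mu> c))"
    by (rule sum_children_eq) (use parent_entry nz in \<open>auto simp: mem_children\<close>)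
  also have "\<dots> = v $ r * of_real (\<mu> - D \<mu> r)"
    using branch_quotientsD[OF D root_less, of \<mu>] by (simp add: of_real_sum)
  finally have "v $ r * of_real (\<mu> - D \<mu> r) = of_real \<mu> * v $ r"
    using arg_cong[OF ev, of "\<lambda>u. u $ r"] adj_mat_mult_vec_nth_tree[OF v root_less] v root_less
    by simp
  hence "v $ r = 0" using Dr by (simp add: algebra_simps)
  have "v $ c = 0" if "c < N" for c
    using that
  proof (induction rule: parent_induct)
    case root show ?case by fact
  next
    case (step c)
    thus ?case using parent_entry[of c] nz[of c] by simp
  qed
  hence "v = 0\<^sub>v N" using v by (intro eq_vecI) auto
  thus False using v0 by simp
qed

lemma eigenvalue_if_root_quotient_zero:
  assumes D: "branch_quotients D" and Dr: "D \<mu> r = 0"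
    and nz: "\<And>i. i < N \<Longrightarrow> i \<noteq> r \<Longrightarrow> D \<mu> i \<noteq> 0"
  shows "eigenvalue adj_mat (of_real \<mu>)"
proof -
  define x where "x = inv_path_prod parent depth r (D \<mu>)"
  have x_parent: "x (parent c) = D \<mu> c * x c" if "c < N" "c \<noteq> r" for c
    unfolding x_def using depth_parent_less[OF that] that nz[OF that]
    by (subst (2) inv_path_prod.simps) simp
  have x_root: "x r = 1" unfolding x_def by (subst inv_path_prod.simps) simp
  have x_eq: "(if i = r then 0 else x (parent i)) + (\<Sum>c\<in>children i. x c) = \<mu> * x i"
    if i: "i < N" for i
  proof -
    have "(\<Sum>c\<in>children i. x c) = x i * (\<Sum>c\<in>children i. 1 / D \<mu> c)"
      by (rule sum_children_eq) (use x_parent nz in \<open>auto simp: mem_children\<close>)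
    thus ?thesis
      using branch_quotientsD[OF D i, of \<mu>] Dr x_parent[OF i]
        by (cases "i = r") (simp_all add: distrib_left[symmetric] mult.commute)
  qed
  define V where "V = vec N (\<lambda>i. complex_of_real (x i))"
  have V: "V \<in> carrier_vec N" unfolding V_def by simp
  have "adj_mat *\<^sub>v V = of_real \<mu> \<cdot>\<^sub>v V"
  proof (rule eq_vecI)
    fix i assume "i < dim_vec (of_real \<mu> \<cdot>\<^sub>v V)"
    hence i: "i < N" unfolding V_def by simp
    have "(adj_mat *\<^sub>v V) $ i
        = of_real ((if i = r then 0 else x (parent i)) + (\<Sum>c\<in>children i. x c))"
      unfolding adj_mat_mult_vec_nth_tree[OF V i] using parent_less i
      by (auto simp: V_def of_real_sum mem_children intro!: sum.cong)
    thus "(adj_mat *\<^sub>v V) $ i = (of_real \<mu> \<cdot>\<^sub>v V) $ i" using x_eq[OF i] i by (simp add: V_def)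
  qed (simp add: V_def adj_mat_def)
  moreover have "V \<noteq> 0\<^sub>v N"
  proof
    assume "V = 0\<^sub>v N"
    hence "V $ r = 0" using root_less by simp
    thus False using x_root root_less by (simp add: V_def)
  qed
  ultimately have "eigenvector adj_mat V (of_real \<mu>)"
    unfolding eigenvector_def using adj_mat_carrier V by auto
  thus ?thesis unfolding eigenvalue_def by blast
qed

lemma abs_le_spectral_radius:
  assumes "eigenvalue adj_mat (of_real \<mu>)"
  shows "\<bar>\<mu>\<bar> \<le> spectral_radius adj_mat"
proof -
  have "cmod (of_real \<mu>) \<in> cmod ` spectrum adj_mat"
    using assms unfolding spectrum_def by (intro imageI) auto
  thus ?thesis using spectral_radius_mem_max(2)[OF adj_mat_carrier] root_less by simp
qed

lemma branch_quotient_mono: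
  assumes D: "branch_quotients D" and l: "l0 \<le> l" and pos: "\<And>i. i < N \<Longrightarrow> 0 < D l0 i"
    and i: "i < N"
  shows "D l0 i \<le> D l i"
  using i
proof (induction rule: children_induct)
  case (step i)
  have "(\<Sum>c\<in>children i. 1 / D l c) \<le> (\<Sum>c\<in>children i. 1 / D l0 c)"
  proof (rule sum_mono)
    fix c assume c: "c \<in> children i"
    have "0 < D l0 c" "D l0 c \<le> D l c" using pos step.IH[OF c] c by (auto simp: mem_children)
    thus "1 / D l c \<le> 1 / D l0 c" by (simp add: frac_le)
  qed
  thus ?case using branch_quotientsD[OF D step.hyps] l by (metis diff_mono)
qed

lemma branch_quotient_uminus:
  assumes D: "branch_quotients D" and i: "i < N"
  shows "D (- l) i = - D l i"
  using i
proof (induction rule: children_induct)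
  case (step i)
  thus ?case
    using branch_quotientsD[OF D step.hyps, of "- l"] branch_quotientsD[OF D step.hyps, of l]
    by (simp add: sum_negf)
qed

lemma spectral_radius_less_if_quotients_pos:
  assumes D: "branch_quotients D" and pos: "\<And>i. i < N \<Longrightarrow> 0 < D \<mu> i"
  shows "spectral_radius adj_mat < \<mu>"
proof (rule ccontr)
  assume "\<not> spectral_radius adj_mat < \<mu>"
  obtain \<nu> where \<nu>: "\<nu> \<in> spectrum adj_mat" "cmod \<nu> = spectral_radius adj_mat"
    using spectral_radius_mem_max(1)[OF adj_mat_carrier] root_less by auto
  then obtain v where "eigenvector adj_mat v \<nu>" unfolding spectrum_def eigenvalue_def by auto
  hence v: "v \<in> carrier_vec N" "v \<noteq> 0\<^sub>v N" "adj_mat *\<^sub>v v = \<nu> \<cdot>\<^sub>v v"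
    using adj_mat_carrier unfolding eigenvector_def by auto
  define x where "x = Re \<nu>"
  have "\<nu> = of_real x"
    using eigenvector_eigenvalue_real[OF v(3,1,2)] unfolding x_def by (simp add: complex_eq_iff)
  with v have ev: "adj_mat *\<^sub>v v = of_real x \<cdot>\<^sub>v v" by simp
  have "\<mu> \<le> \<bar>x\<bar>" using \<nu> \<open>\<not> spectral_radius adj_mat < \<mu>\<close> \<open>\<nu> = of_real x\<close> by simp
  hence pos_abs: "0 < D \<bar>x\<bar> i" if "i < N" for i
    using branch_quotient_mono[OF D \<open>\<mu> \<le> \<bar>x\<bar>\<close> pos that] pos[OF that] by simp
  have nz: "D x i \<noteq> 0" if "i < N" for i
  proof (cases "0 \<le> x")
    case True thus ?thesis using pos_abs[OF that] by simp
  next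
    case False thus ?thesis using pos_abs[OF that] branch_quotient_uminus[OF D that, of x] by simp
  qed
  have "D x r = 0" by (rule root_quotient_zero_if_eigenvector[OF D ev v(1,2) nz])
  thus False using nz[OF root_less] by simp
qed

lemma branch_quotient_ge_one:
  assumes D: "branch_quotients D" and l: "real N + 1 \<le> l" and i: "i < N"
  shows "1 \<le> D l i"
  using i
proof (induction rule: children_induct)
  case (step i)
  have "(\<Sum>c\<in>children i. 1 / D l c) \<le> (\<Sum>c\<in>children i. 1)"
  proof (rule sum_mono)
    fix c assume "c \<in> children i"
    hence "1 \<le> D l c" by (rule step.IH)
    thus "1 / D l c \<le> 1" by simp
  qed
  also have "\<dots> \<le> real N" using card_children_le by simp
  finally show ?case using branch_quotientsD[OF D step.hyps, of l] l by linarith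
qed

lemma continuous_on_branch_quotient:
  assumes D: "branch_quotients D"
    and nz: "\<And>l i. l \<in> {a..b} \<Longrightarrow> i < N \<Longrightarrow> i \<noteq> r \<Longrightarrow> D l i \<noteq> 0" and i: "i < N"
  shows "continuous_on {a..b} (\<lambda>l. D l i)"
  using i
proof (induction rule: children_induct)
  case (step i)
  have "continuous_on {a..b} (\<lambda>l. l - (\<Sum>c\<in>children i. 1 / D l c))"
    using step.IH nz by (intro continuous_intros) (auto simp: mem_children)
  thus ?case using branch_quotientsD[OF D step.hyps] by simp
qed

lemma root_quotient_has_zero:
  assumes D: "branch_quotients D"
    and pos: "\<And>l i. a \<le> l \<Longrightarrow> i < N \<Longrightarrow> i \<noteq> r \<Longrightarrow> 0 < D l i" and start: "D a r \<le> 0"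
  obtains l where "a \<le> l" "D l r = 0"
proof -
  define b where "b = max a (real N + 1)"
  have "1 \<le> D b r" using branch_quotient_ge_one[OF D _ root_less] unfolding b_def by simp
  moreover have "continuous_on {a..b} (\<lambda>l. D l r)"
    by (rule continuous_on_branch_quotient[OF D _ root_less]) (use pos in force)
  ultimately obtain l where "a \<le> l" "D l r = 0"
    using IVT'[of "\<lambda>l. D l r" a 0 b] start unfolding b_def by force
  thus ?thesis by (rule that)
qed

end

lemma spectral_radius_less_by_quotients:
  assumes T1: "rooted_tree N r p dep" and T2: "rooted_tree N' r' p' dep'"
    and D1: "rooted_tree.branch_quotients N r p D"
      and D2: "rooted_tree.branch_quotients N' r' p' D'"
    and pos1: "\<And>l i. a \<le> l \<Longrightarrow> i < N \<Longrightarrow> i \<noteq> r \<Longrightarrow> 0 < D l i"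
    and pos2: "\<And>l i. a \<le> l \<Longrightarrow> i < N' \<Longrightarrow> i \<noteq> r' \<Longrightarrow> 0 < D' l i"
    and root_cmp: "\<And>l. a \<le> l \<Longrightarrow> D l r = 0 \<Longrightarrow> 0 < D' l r'"
    and start: "D a r \<le> 0"
  shows "spectral_radius (rooted_tree.adj_mat N' r' p')
    < spectral_radius (rooted_tree.adj_mat N r p)"
proof -
  interpret T1: rooted_tree N r p dep by (rule T1)
  interpret T2: rooted_tree N' r' p' dep' by (rule T2)
  obtain l where l: "a \<le> l" "D l r = 0" using T1.root_quotient_has_zero[OF D1 pos1 start] .
  have "eigenvalue T1.adj_mat (of_real l)"
    by (rule T1.eigenvalue_if_root_quotient_zero[OF D1 l(2)]) (use pos1 l in force)
  hence "\<bar>l\<bar> \<le> spectral_radius T1.adj_mat" by (rule T1.abs_le_spectral_radius)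
  moreover have "spectral_radius T2.adj_mat < l"
    by (rule T2.spectral_radius_less_if_quotients_pos[OF D2])
       (use pos2[OF l(1)] root_cmp[OF l] in \<open>metis\<close>)
  ultimately show ?thesis by simp
qed

lemma mem_path_edges:
  "(a, b) \<in> path_edges x s k \<longleftrightarrow> 0 < k \<and> ((a, b) = (x, s) \<or> (s \<le> a \<and> b = a + 1 \<and> b < s + k))"
  unfolding path_edges_def by (auto intro!: exI[of _ "a - s"])

locale tree_hqq =
  fixes r1 r2 h q1 q2 :: nat
  assumes h_pos: "1 \<le> h" and q1_pos: "1 \<le> q1" and q2_ge2: "2 \<le> q2"
begin

abbreviation "nverts \<equiv> 1 + h + q1 + q2 + 2 * (r1 + r2)"
abbreviation "v2 \<equiv> h + q1 + q2"
abbreviation "pend0 \<equiv> h + q1 + q2 + 1"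

text \<open>The tree is rooted at \<open>v\<^sub>2\<close>: along the path from \<open>u = 0\<close> to \<open>v\<^sub>2\<close> parents have larger
  labels, elsewhere smaller ones; \<open>tdepth\<close> is the distance to \<open>v\<^sub>2\<close>.\<close>
definition tparent :: "nat \<Rightarrow> nat" where
  "tparent c = (if c = 0 then h + q1 + 1
    else if c \<le> h + q1 then (if c = h + 1 then 0 else c - 1)
    else if c < v2 then c + 1
    else if c = v2 then 0
    else if (c - pend0) mod 2 = 0 then (if c - pend0 < 2 * r1 then h + q1 else v2) else c - 1)"

definition tdepth :: "nat \<Rightarrow> nat" where
  "tdepth c = (if c = 0 then q2
    else if c \<le> h then q2 + c
    else if c \<le> h + q1 then q2 + c - h
    else if c \<le> v2 then v2 - c
    else if c - pend0 < 2 * r1 then q2 + q1 + 1 + (c - pend0) mod 2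
    else 1 + (c - pend0) mod 2)"

lemma is_rooted_tree: "rooted_tree nverts v2 tparent tdepth"
proof
  show "v2 < nverts" by simp
  fix c :: nat assume c: "c < nverts" "c \<noteq> v2"
  show "tparent c < nverts" using c h_pos q1_pos q2_ge2 unfolding tparent_def by auto
  consider "c \<le> v2" | "pend0 \<le> c" "(c - pend0) mod 2 = 0" | "pend0 \<le> c" "(c - pend0) mod 2 = 1"
    by linarith
  thus "tdepth (tparent c) < tdepth c"
  proof cases
    case 3
    then obtain e where "c = pend0 + 2 * e + 1"
      by (metis le_add_diff_inverse mult_div_mod_eq add.assoc)
    thus ?thesis using c h_pos q1_pos q2_ge2 unfolding tparent_def tdepth_def by auto
  qed (use c h_pos q1_pos q2_ge2 in \<open>auto simp: tparent_def tdepth_def\<close>)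
qed

end

sublocale tree_hqq \<subseteq> rooted_tree nverts v2 tparent tdepth
  by (rule is_rooted_tree)

context tree_hqq
begin

lemma vertex_cases[case_names u pendant pendant_end v1path v1 v2path_start v2path root
    pend2_inner pend2_leaf]:
  obtains "i = 0" | "1 \<le> i" "i < h" | "i = h" | "h < i" "i < h + q1" | "i = h + q1"
    | "i = h + q1 + 1" | "h + q1 + 1 < i" "i < v2" | "i = v2"
    | "pend0 \<le> i" "(i - pend0) mod 2 = 0" | "pend0 \<le> i" "(i - pend0) mod 2 = 1"
proof -
  have "i = 0 \<or> (1 \<le> i \<and> i < h) \<or> i = h \<or> (h < i \<and> i < h + q1) \<or> i = h + q1
    \<or> i = h + q1 + 1 \<or> (h + q1 + 1 < i \<and> i < v2) \<or> i = v2 \<or> pend0 \<le> i"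
    by linarith
  moreover have "(i - pend0) mod 2 = 0 \<or> (i - pend0) mod 2 = 1" by auto
  ultimately show ?thesis using that by (elim disjE conjE) (rule that; assumption)+
qed

lemma mem_children_iff: "c \<in> children i \<longleftrightarrow> c < nverts \<and> c \<noteq> v2 \<and>
     ((c = 0 \<and> i = h + q1 + 1) \<or> (1 \<le> c \<and> c \<le> h + q1 \<and> c \<noteq> h + 1 \<and> i = c - 1)
     \<or> (c = h + 1 \<and> i = 0) \<or> (h + q1 < c \<and> c < v2 \<and> i = c + 1)
     \<or> (pend0 \<le> c \<and> (c - pend0) mod 2 = 0 \<and> c - pend0 < 2 * r1 \<and> i = h + q1)
     \<or> (pend0 \<le> c \<and> (c - pend0) mod 2 = 0 \<and> \<not> c - pend0 < 2 * r1 \<and> i = v2)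
     \<or> (pend0 \<le> c \<and> (c - pend0) mod 2 = 1 \<and> i = c - 1))"
  unfolding mem_children tparent_def using h_pos q1_pos q2_ge2 by auto

lemma children_u: "children 0 = {1, h + 1}"
  unfolding set_eq_iff mem_children_iff using h_pos q1_pos q2_ge2 by auto

lemma children_pendant: "1 \<le> i \<Longrightarrow> i < h \<Longrightarrow> children i = {i + 1}"
  unfolding set_eq_iff mem_children_iff using h_pos q1_pos q2_ge2 by auto

lemma children_pendant_end: "children h = {}"
  unfolding set_eq_iff mem_children_iff using h_pos q1_pos q2_ge2 by auto

lemma children_v1path: "h < i \<Longrightarrow> i < h + q1 \<Longrightarrow> children i = {i + 1}"
  unfolding set_eq_iff mem_children_iff using h_pos q1_pos q2_ge2 by auto

lemma children_v2path_start: "children (h + q1 + 1) = {0}"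
  unfolding set_eq_iff mem_children_iff using h_pos q1_pos q2_ge2 by auto

lemma children_v2path: "h + q1 + 1 < i \<Longrightarrow> i < v2 \<Longrightarrow> children i = {i - 1}"
  unfolding set_eq_iff mem_children_iff using h_pos q1_pos q2_ge2 by auto

lemma children_v1: "children (h + q1) = (\<lambda>k. pend0 + 2 * k) ` {..<r1}"
proof (intro Set.set_eqI iffI)
  fix c assume "c \<in> children (h + q1)"
  hence "pend0 \<le> c" "(c - pend0) mod 2 = 0" "c - pend0 < 2 * r1"
    unfolding mem_children_iff using h_pos q1_pos q2_ge2 by auto
  thus "c \<in> (\<lambda>k. pend0 + 2 * k) ` {..<r1}"
    by (intro image_eqI[of _ _ "(c - pend0) div 2"]) auto
next
  fix c assume "c \<in> (\<lambda>k. pend0 + 2 * k) ` {..<r1}"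
  then obtain k where "k < r1" "c = pend0 + 2 * k" by blast
  thus "c \<in> children (h + q1)" unfolding mem_children_iff by simp
qed

lemma children_v2: "children v2 = insert (v2 - 1) ((\<lambda>k. pend0 + 2 * r1 + 2 * k) ` {..<r2})"
proof (intro Set.set_eqI iffI)
  fix c assume c: "c \<in> children v2"
  show "c \<in> insert (v2 - 1) ((\<lambda>k. pend0 + 2 * r1 + 2 * k) ` {..<r2})"
  proof (cases "c < v2")
    case True
    thus ?thesis using c h_pos q1_pos q2_ge2 unfolding mem_children_iff by auto
  next
    case False
    define e where "e = c - pend0"
    have "c = pend0 + e" "e mod 2 = 0" "2 * r1 \<le> e" "e < 2 * r1 + 2 * r2"
      using c False h_pos q1_pos q2_ge2 unfolding mem_children_iff e_def by auto
    moreover from this have "e = 2 * r1 + 2 * ((e - 2 * r1) div 2)" "(e - 2 * r1) div 2 < r2"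
      by presburger+
    ultimately show ?thesis by (intro insertI2 image_eqI[of _ _ "(e - 2 * r1) div 2"]) auto
  qed
next
  fix c assume "c \<in> insert (v2 - 1) ((\<lambda>k. pend0 + 2 * r1 + 2 * k) ` {..<r2})"
  then consider "c = v2 - 1" | k where "k < r2" "c = pend0 + 2 * r1 + 2 * k" by blast
  thus "c \<in> children v2" unfolding mem_children_iff using q2_ge2 by cases auto
qed

lemma children_pend2_inner:
  assumes "pend0 \<le> i" "i < nverts" "(i - pend0) mod 2 = 0"
  shows "children i = {i + 1}"
proof (intro Set.set_eqI iffI)
  fix c assume "c \<in> children i"
  thus "c \<in> {i + 1}" using assms(1) q2_ge2 unfolding mem_children_iff by auto
next
  fix c assume "c \<in> {i + 1}"
  moreover have "(i + 1 - pend0) mod 2 = 1" "i + 1 < nverts" using assms by presburger+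
  ultimately show "c \<in> children i" using assms(1) unfolding mem_children_iff by auto
qed

lemma children_pend2_leaf:
  assumes "pend0 \<le> i" "(i - pend0) mod 2 = 1"
  shows "children i = {}"
proof -
  have "\<not> (pend0 \<le> c \<and> (c - pend0) mod 2 = 1 \<and> i = c - 1)" for c using assms by presburger
  thus ?thesis unfolding set_eq_iff mem_children_iff using assms(1) q2_ge2 by auto
qed


lemma tparent_pendant: "1 \<le> c \<Longrightarrow> c \<le> h \<Longrightarrow> tparent c = c - 1"
  using h_pos q1_pos q2_ge2 unfolding tparent_def by auto

lemma tparent_v1path_start: "tparent (h + 1) = 0"
  using h_pos q1_pos q2_ge2 unfolding tparent_def by auto

lemma tparent_v1path: "h + 1 < c \<Longrightarrow> c \<le> h + q1 \<Longrightarrow> tparent c = c - 1"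
  using h_pos q1_pos q2_ge2 unfolding tparent_def by auto

lemma tparent_u: "tparent 0 = h + q1 + 1"
  using h_pos q1_pos q2_ge2 unfolding tparent_def by auto

lemma tparent_v2path: "h + q1 < c \<Longrightarrow> c < v2 \<Longrightarrow> tparent c = c + 1"
  using h_pos q1_pos q2_ge2 unfolding tparent_def by auto

lemma tparent_pend2_v1: "k < r1 \<Longrightarrow> tparent (pend0 + 2 * k) = h + q1"
  using h_pos q1_pos q2_ge2 unfolding tparent_def by auto

lemma tparent_pend2_v2: "k < r2 \<Longrightarrow> tparent (pend0 + 2 * r1 + 2 * k) = v2"
  using h_pos q1_pos q2_ge2 unfolding tparent_def by auto

lemma tparent_pend2_leaf: "tparent (pend0 + 2 * k + 1) = pend0 + 2 * k"
  using h_pos q1_pos q2_ge2 unfolding tparent_def by auto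

abbreviation "tedges \<equiv> tree_edges r1 r2 (h, q1, q2)"

lemma tree_edge_imp_adjacent:
  assumes "(a, b) \<in> tedges"
  shows "adjacent a b"
proof -
  note pos = h_pos q1_pos q2_ge2
  from assms consider
      "(a, b) \<in> path_edges 0 1 h" | "(a, b) \<in> path_edges 0 (h + 1) q1"
    | "(a, b) \<in> path_edges 0 (h + q1 + 1) q2"
    | k where "k < r1" "(a, b) \<in> path_edges (h + q1) (pend0 + 2 * k) 2"
    | k where "k < r2" "(a, b) \<in> path_edges v2 (pend0 + 2 * r1 + 2 * k) 2"
    unfolding tree_edges_def Let_def by auto
  thus ?thesis
  proof cases
    case 1
    hence "1 \<le> b" "b \<le> h" "a = b - 1" by (auto simp: mem_path_edges)
    thus ?thesis using tparent_pendant[of b] pos unfolding adjacent_def by auto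
  next
    case 2
    hence "a = 0 \<and> b = h + 1 \<or> h + 1 < b \<and> b \<le> h + q1 \<and> a = b - 1"
      by (auto simp: mem_path_edges)
    thus ?thesis using tparent_v1path_start tparent_v1path[of b] pos unfolding adjacent_def by auto
  next
    case 3
    hence "a = 0 \<and> b = h + q1 + 1 \<or> h + q1 < a \<and> a < v2 \<and> b = a + 1"
      by (auto simp: mem_path_edges)
    thus ?thesis using tparent_u tparent_v2path[of a] pos unfolding adjacent_def by auto
  next
    case (4 k)
    hence "a = h + q1 \<and> b = pend0 + 2 * k \<or> a = pend0 + 2 * k \<and> b = pend0 + 2 * k + 1"
      by (auto simp: mem_path_edges)
    thus ?thesis using tparent_pend2_v1[OF 4(1)] tparent_pend2_leaf[of k] unfolding adjacent_def
      by auto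
  next
    case (5 k)
    hence "a = v2 \<and> b = pend0 + 2 * r1 + 2 * k
      \<or> a = pend0 + 2 * (r1 + k) \<and> b = pend0 + 2 * (r1 + k) + 1"
      by (auto simp: mem_path_edges algebra_simps)
    thus ?thesis using tparent_pend2_v2[OF 5(1)] tparent_pend2_leaf[of "r1 + k"]
      unfolding adjacent_def by auto
  qed
qed

lemma pend2_cases:
  assumes "pend0 \<le> c" "c < nverts"
  obtains k where "k < r1" "c = pend0 + 2 * k" | k where "k < r1" "c = pend0 + 2 * k + 1"
    | k where "k < r2" "c = pend0 + 2 * r1 + 2 * k"
    | k where "k < r2" "c = pend0 + 2 * r1 + 2 * k + 1"
proof -
  define k where "k = (c - pend0) div 2"
  have "c = pend0 + 2 * k \<or> c = pend0 + 2 * k + 1" "k < r1 + r2" using assms unfolding k_def by auto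
  thus ?thesis using that
    by (cases "k < r1")
      (metis add_diff_inverse_nat add.assoc add_mult_distrib2 add_less_imp_less_left)+
qed

lemma tparent_tree_edge:
  assumes c: "c < nverts" "c \<noteq> v2"
  shows "(tparent c, c) \<in> tedges \<or> (c, tparent c) \<in> tedges"
proof -
  have edges:
    "path_edges 0 1 h \<union> path_edges 0 (h + 1) q1 \<union> path_edges 0 (h + q1 + 1) q2 \<subseteq> tedges"
    "k < r1 \<Longrightarrow> path_edges (h + q1) (pend0 + 2 * k) 2 \<subseteq> tedges"
    "k < r2 \<Longrightarrow> path_edges v2 (pend0 + 2 * r1 + 2 * k) 2 \<subseteq> tedges" for k
    unfolding tree_edges_def Let_def by auto
  consider "c \<le> h + q1" | "h + q1 < c" "c < v2" | "pend0 \<le> c" using c by linarith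
  thus ?thesis
  proof cases
    case 1
    have "(tparent c, c) \<in> path_edges 0 1 h \<union> path_edges 0 (h + 1) q1 \<union> path_edges 0 (h + q1 + 1) q2
      \<or> (c, tparent c) \<in> path_edges 0 (h + q1 + 1) q2"
      using 1 h_pos q1_pos q2_ge2 by (simp add: mem_path_edges tparent_def) arith
    thus ?thesis using edges(1) by blast
  next
    case 2
    hence "(c, tparent c) \<in> path_edges 0 (h + q1 + 1) q2"
      by (simp add: mem_path_edges tparent_v2path)
    thus ?thesis using edges(1) by blast
  next
    case 3
    from this c(1) show ?thesis
    proof (cases rule: pend2_cases)
      case (1 k)
      hence "(h + q1, c) \<in> path_edges (h + q1) (pend0 + 2 * k) 2" by (simp add: mem_path_edges)
      thus ?thesis using edges(2)[OF 1(1)] tparent_pend2_v1[OF 1(1)] 1(2) by auto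
    next
      case (2 k)
      hence "(c - 1, c) \<in> path_edges (h + q1) (pend0 + 2 * k) 2" by (simp add: mem_path_edges)
      thus ?thesis using edges(2)[OF 2(1)] tparent_pend2_leaf[of k] 2(2) by auto
    next
      case (3 k)
      hence "(v2, c) \<in> path_edges v2 (pend0 + 2 * r1 + 2 * k) 2" by (simp add: mem_path_edges)
      thus ?thesis using edges(3)[OF 3(1)] tparent_pend2_v2[OF 3(1)] 3(2) by auto
    next
      case (4 k)
      hence "(c - 1, c) \<in> path_edges v2 (pend0 + 2 * r1 + 2 * k) 2" by (simp add: mem_path_edges)
      thus ?thesis using edges(3)[OF 4(1)] tparent_pend2_leaf[of "r1 + k"] 4(2)
        by (auto simp: algebra_simps)
    qed
  qed
qed

lemma tree_edge_iff_adjacent: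
  assumes "i < nverts" "j < nverts"
  shows "(i, j) \<in> tedges \<or> (j, i) \<in> tedges \<longleftrightarrow> adjacent i j"
  using tree_edge_imp_adjacent adjacent_sym tparent_tree_edge assms unfolding adjacent_def by metis

lemma tree_adj_eq_adj_mat: "tree_adj r1 r2 (h, q1, q2) = adj_mat"
  unfolding tree_adj_def adj_mat_def tree_order_def
  by (rule eq_matI) (auto simp: tree_edge_iff_adjacent)

end

fun cf_iter :: "real \<Rightarrow> real \<Rightarrow> nat \<Rightarrow> real" where
  "cf_iter l x 0 = x"
| "cf_iter l x (Suc k) = l - 1 / cf_iter l x k"

text \<open>Branch quotients of the tree rooted at \<open>v\<^sub>2\<close>, indexed by the distance \<open>k\<close> from the
  start of the respective path: a pendant path read from its leaf, the path from \<open>v\<^sub>1\<close>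
  towards \<open>u\<close>, and the path from \<open>u\<close> towards \<open>v\<^sub>2\<close>.\<close>

definition quot_pendant :: "real \<Rightarrow> nat \<Rightarrow> real" where
  "quot_pendant l k = cf_iter l l k"

definition quot_v1path :: "nat \<Rightarrow> real \<Rightarrow> nat \<Rightarrow> real" where
  "quot_v1path r1 l k = cf_iter l (l - real r1 / quot_pendant l 1) k"

definition quot_u :: "nat \<Rightarrow> nat \<Rightarrow> nat \<Rightarrow> real \<Rightarrow> real" where
  "quot_u r1 h q1 l = l - 1 / quot_pendant l (h - 1) - 1 / quot_v1path r1 l (q1 - 1)"

definition quot_v2path :: "nat \<Rightarrow> nat \<Rightarrow> nat \<Rightarrow> real \<Rightarrow> nat \<Rightarrow> real" where
  "quot_v2path r1 h q1 l k = cf_iter l (quot_u r1 h q1 l) k"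

definition quot_root :: "nat \<Rightarrow> nat \<Rightarrow> nat \<Rightarrow> nat \<Rightarrow> nat \<Rightarrow> real \<Rightarrow> real" where
  "quot_root r1 r2 h q1 q2 l = l - real r2 / quot_pendant l 1 - 1 / quot_v2path r1 h q1 l (q2 - 1)"

context tree_hqq
begin

definition tree_quot :: "real \<Rightarrow> nat \<Rightarrow> real" where
  "tree_quot l c = (if c = 0 then quot_u r1 h q1 l
   else if c \<le> h then quot_pendant l (h - c)
   else if c \<le> h + q1 then quot_v1path r1 l (h + q1 - c)
   else if c < v2 then quot_v2path r1 h q1 l (c - h - q1)
   else if c = v2 then quot_root r1 r2 h q1 q2 l
   else if (c - pend0) mod 2 = 0 then quot_pendant l 1 else quot_pendant l 0)"

lemma tree_quot_pend2:
  "pend0 \<le> c \<Longrightarrow>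
    tree_quot l c = (if (c - pend0) mod 2 = 0 then quot_pendant l 1 else quot_pendant l 0)"
  unfolding tree_quot_def by auto

lemma tree_quot_root: "tree_quot l v2 = quot_root r1 r2 h q1 q2 l"
  unfolding tree_quot_def using h_pos q1_pos q2_ge2 by auto

lemma sum_children_v1: "(\<Sum>c\<in>children (h + q1). 1 / tree_quot l c) = real r1 / quot_pendant l 1"
proof -
  have "inj_on (\<lambda>k. pend0 + 2 * k) {..<r1}" by (auto simp: inj_on_def)
  hence "(\<Sum>c\<in>children (h + q1). 1 / tree_quot l c) = (\<Sum>k<r1. 1 / tree_quot l (pend0 + 2 * k))"
    unfolding children_v1 by (rule sum.reindex_cong) simp_all
  also have "\<dots> = (\<Sum>k<r1. 1 / quot_pendant l 1)" by (intro sum.cong) (simp_all add: tree_quot_pend2)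
  finally show ?thesis by simp
qed

lemma sum_children_v2:
  "(\<Sum>c\<in>children v2. 1 / tree_quot l c)
     = 1 / quot_v2path r1 h q1 l (q2 - 1) + real r2 / quot_pendant l 1"
proof -
  let ?P = "(\<lambda>k. pend0 + 2 * r1 + 2 * k) ` {..<r2}"
  have "inj_on (\<lambda>k. pend0 + 2 * r1 + 2 * k) {..<r2}" by (auto simp: inj_on_def)
  hence "(\<Sum>c\<in>?P. 1 / tree_quot l c) = (\<Sum>k<r2. 1 / tree_quot l (pend0 + 2 * r1 + 2 * k))"
    by (rule sum.reindex_cong) simp_all
  also have "\<dots> = real r2 / quot_pendant l 1" by (simp add: tree_quot_pend2)
  finally have "(\<Sum>c\<in>?P. 1 / tree_quot l c) = real r2 / quot_pendant l 1" .
  moreover have "tree_quot l (v2 - 1) = quot_v2path r1 h q1 l (q2 - 1)"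
    using q2_ge2 unfolding tree_quot_def by auto
  moreover have "v2 - 1 \<notin> ?P" by auto
  ultimately show ?thesis unfolding children_v2 by simp
qed

lemma branch_quotients_tree_quot: "branch_quotients tree_quot"
  unfolding branch_quotients_def
proof (intro allI impI)
  fix l i assume i: "i < nverts"
  show "tree_quot l i = l - (\<Sum>c\<in>children i. 1 / tree_quot l c)"
  proof (cases rule: vertex_cases[of i])
    case u
    have "tree_quot l 1 = quot_pendant l (h - 1)" "tree_quot l (h + 1) = quot_v1path r1 l (q1 - 1)"
      using h_pos q1_pos unfolding tree_quot_def by auto
    moreover have "tree_quot l 0 = quot_u r1 h q1 l" unfolding tree_quot_def by simp
    ultimately show ?thesis using h_pos unfolding u children_u by (simp add: quot_u_def)
  next
    case pendant
    hence "h - i = Suc (h - (i + 1))" by simp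
    thus ?thesis using pendant unfolding children_pendant[OF pendant]
      by (simp add: tree_quot_def quot_pendant_def del: cf_iter.simps) simp
  next
    case pendant_end
    thus ?thesis using h_pos unfolding pendant_end children_pendant_end
      by (simp add: tree_quot_def quot_pendant_def)
  next
    case v1path
    hence "h + q1 - i = Suc (h + q1 - (i + 1))" by simp
    thus ?thesis using v1path unfolding children_v1path[OF v1path]
      by (simp add: tree_quot_def quot_v1path_def del: cf_iter.simps) simp
  next
    case v1
    thus ?thesis using h_pos q1_pos sum_children_v1 unfolding v1
      by (simp add: tree_quot_def quot_v1path_def)
  next
    case v2path_start
    thus ?thesis using q2_ge2 unfolding v2path_start children_v2path_start
      by (simp add: tree_quot_def quot_v2path_def)
  next
    case v2path
    have "tree_quot l (i - 1) = quot_v2path r1 h q1 l (i - 1 - h - q1)"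
      "tree_quot l i = quot_v2path r1 h q1 l (Suc (i - 1 - h - q1))"
      using v2path unfolding tree_quot_def by (auto simp: Suc_diff_Suc)
    thus ?thesis unfolding children_v2path[OF v2path] by (simp add: quot_v2path_def)
  next
    case root
    thus ?thesis using sum_children_v2 unfolding root by (simp add: tree_quot_root quot_root_def)
  next
    case pend2_inner
    moreover have "(i + 1 - pend0) mod 2 = 1" using pend2_inner by presburger
    ultimately show ?thesis unfolding children_pend2_inner[OF pend2_inner(1) i pend2_inner(2)]
      by (simp add: tree_quot_pend2 quot_pendant_def)
  next
    case pend2_leaf
    thus ?thesis unfolding children_pend2_leaf[OF pend2_leaf]
      by (simp add: tree_quot_pend2 quot_pendant_def)
  qed
qed

end

lemma cf_iter_Suc_inner: "cf_iter l x (Suc k) = cf_iter l (cf_iter l x 1) k"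
  by (induction k) auto

text \<open>For \<open>l > 2\<close> the map \<open>x \<mapsto> l - 1/x\<close> has the fixed points \<open>s < 1 < t = 1/s\<close>; it is
  increasing on \<open>x > 0\<close>, so orbits starting in \<open>(s, t)\<close> increase towards \<open>t\<close> and
  orbits starting above \<open>t\<close> decrease towards \<open>t\<close>.\<close>
locale cf_iteration =
  fixes l :: real
  assumes two_less: "2 < l"
begin

lemma l_pos: "0 < l"
  using two_less by simp

definition s where "s = (l - sqrt (l\<^sup>2 - 4)) / 2"
abbreviation "t \<equiv> l - s"

lemma four_less_l2: "4 < l\<^sup>2"
  using power_strict_mono[OF two_less, of 2] by simp

lemma sqrt_disc_sq: "sqrt (l\<^sup>2 - 4) ^ 2 = l\<^sup>2 - 4"
  using four_less_l2 by simp

lemma sqrt_disc_less: "sqrt (l\<^sup>2 - 4) < l"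
proof -
  have "sqrt (l\<^sup>2 - 4) < sqrt (l\<^sup>2)" by (rule real_sqrt_less_mono) simp
  thus ?thesis using l_pos by simp
qed

lemma s_pos: "0 < s"
  unfolding s_def using sqrt_disc_less by simp

lemma s_less_1: "s < 1"
proof -
  have "(l - 2)^2 < l\<^sup>2 - 4" using two_less by (simp add: power2_eq_square algebra_simps)
  hence "l - 2 < sqrt (l\<^sup>2 - 4)" using two_less by (simp add: real_less_rsqrt)
  thus ?thesis unfolding s_def by simp
qed

lemma s_mult_t: "s * t = 1"
proof -
  have "s * t = (l - sqrt (l\<^sup>2 - 4)) * (l + sqrt (l\<^sup>2 - 4)) / 4" unfolding s_def
    by (simp add: field_simps)
  also have "\<dots> = (l\<^sup>2 - sqrt (l\<^sup>2 - 4) ^ 2) / 4" by (simp add: power2_eq_square algebra_simps)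
  also have "\<dots> = 1" using sqrt_disc_sq by simp
  finally show ?thesis .
qed

lemma t_pos: "0 < t"
  using s_pos s_less_1 two_less by simp

lemma s_less_t: "s < t"
  using s_less_1 two_less by simp

lemma one_div_s: "1 / s = t"
  using s_mult_t s_pos by (simp add: field_simps)

lemma one_div_t: "1 / t = s"
  using s_mult_t t_pos by (simp add: field_simps)

lemma cf_step_strict_mono: "0 < x \<Longrightarrow> x < y \<Longrightarrow> l - 1 / x < l - 1 / y"
  by (simp add: frac_less2)

lemma cf_iter_gt_s: "s < x \<Longrightarrow> s < cf_iter l x k"
proof (induction k)
  case 0 thus ?case by simp
next
  case (Suc k)
  have "l - 1 / s < l - 1 / cf_iter l x k"
    using cf_step_strict_mono[OF s_pos Suc.IH[OF Suc.prems]] .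
  thus ?case using one_div_s by simp
qed

lemma cf_iter_gt_t: "t < x \<Longrightarrow> t < cf_iter l x k"
proof (induction k)
  case 0 thus ?case by simp
next
  case (Suc k)
  have "l - 1 / t < l - 1 / cf_iter l x k"
    using cf_step_strict_mono[OF t_pos Suc.IH[OF Suc.prems]] .
  thus ?case using one_div_t by simp
qed

lemma cf_iter_less_t: "s < x \<Longrightarrow> x < t \<Longrightarrow> cf_iter l x k < t"
proof (induction k)
  case 0 thus ?case by simp
next
  case (Suc k)
  have "0 < cf_iter l x k" using cf_iter_gt_s[OF Suc.prems(1), of k] s_pos by simp
  hence "l - 1 / cf_iter l x k < l - 1 / t" using cf_step_strict_mono Suc.IH[OF Suc.prems] by blast
  thus ?case using one_div_t by simp
qed

lemma cf_iter_strict_mono: "s < x \<Longrightarrow> x < y \<Longrightarrow> cf_iter l x k < cf_iter l y k"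
proof (induction k)
  case 0 thus ?case by simp
next
  case (Suc k)
  have "0 < cf_iter l x k" using cf_iter_gt_s[OF Suc.prems(1), of k] s_pos by simp
  thus ?case using cf_step_strict_mono Suc.IH[OF Suc.prems] by simp
qed

lemma cf_iter_increasing:
  assumes "s < x" "x < cf_iter l x 1"
  shows "cf_iter l x k < cf_iter l x (Suc k)"
  using cf_iter_strict_mono[OF assms(1) assms(2), of k] unfolding cf_iter_Suc_inner[of l x k] .

lemma cf_iter_mono_index:
  assumes "s < x" "x < cf_iter l x 1" "k \<le> k'"
  shows "cf_iter l x k \<le> cf_iter l x k'"
  using cf_iter_increasing[OF assms(1,2)] assms(3)
  by (rule lift_Suc_mono_le[of "\<lambda>k. cf_iter l x k", OF less_imp_le])

lemma cf_iter_decreasing: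
  assumes "t < x" "cf_iter l x 1 < x"
  shows "cf_iter l x (Suc k) < cf_iter l x k"
proof -
  have "s < cf_iter l x 1" using cf_iter_gt_t[OF assms(1), of 1] s_less_t by simp
  thus ?thesis using cf_iter_strict_mono[OF _ assms(2), of k] unfolding cf_iter_Suc_inner[of l x k]
    by simp
qed

lemma quot_pendant_gt_t: "t < quot_pendant l k"
  unfolding quot_pendant_def using cf_iter_gt_t s_pos by simp

lemma quot_pendant_pos: "0 < quot_pendant l k"
  using quot_pendant_gt_t t_pos by (meson less_trans)

lemma quot_pendant_decreasing: "quot_pendant l (Suc k) < quot_pendant l k"
proof -
  have "l - 1 / l < l" using l_pos by simp
  thus ?thesis unfolding quot_pendant_def using cf_iter_decreasing[of l k] s_pos by simp
qed

lemma inverse_quot_pendant_less_s: "1 / quot_pendant l k < s"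
proof -
  have "1 / quot_pendant l k < 1 / t" using quot_pendant_gt_t t_pos by (simp add: frac_less2)
  thus ?thesis using one_div_t by simp
qed

lemma quot_pendant_1: "quot_pendant l 1 = (l\<^sup>2 - 1) / l"
  unfolding quot_pendant_def using l_pos by (simp add: field_simps power2_eq_square)

lemma two_s: "2 * s = l - sqrt (l\<^sup>2 - 4)"
  unfolding s_def by simp

end

locale large_param = cf_iteration +
  fixes r1 :: nat
  assumes l2_ge5: "5 \<le> l\<^sup>2" and r1_ge2: "2 \<le> r1" and r1_le: "real r1 + 3 \<le> l\<^sup>2"
begin

definition quot_v1 where "quot_v1 = l - real r1 / quot_pendant l 1"

lemma quot_v1_eq: "quot_v1 = l - real r1 * l / (l\<^sup>2 - 1)"
  unfolding quot_v1_def quot_pendant_1 by simp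

lemma l2_minus_1_ge: "4 \<le> l\<^sup>2 - 1"
  using l2_ge5 by simp

lemma quot_v1_ge: "2 * l / (l\<^sup>2 - 1) \<le> quot_v1"
proof -
  have "real r1 * l / (l\<^sup>2 - 1) \<le> (l\<^sup>2 - 3) * l / (l\<^sup>2 - 1)"
    using r1_le l_pos l2_minus_1_ge by (intro divide_right_mono mult_right_mono) auto
  moreover have "l - (l\<^sup>2 - 3) * l / (l\<^sup>2 - 1) = 2 * l / (l\<^sup>2 - 1)"
    using l2_minus_1_ge by (simp add: field_simps)
  ultimately show ?thesis unfolding quot_v1_eq by linarith
qed

lemma s_mult_l2_minus_1_less: "s * (l\<^sup>2 - 1) < 2 * l"
proof -
  have sl: "s * l = s\<^sup>2 + 1" using s_mult_t by (simp add: power2_eq_square algebra_simps)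
  have "s * (l\<^sup>2 - 1) = l * s\<^sup>2 + l - s" using sl by (simp add: power2_eq_square algebra_simps)
  moreover have "l * s\<^sup>2 < l" using s_pos s_less_1 l_pos by (simp add: power_less_one_iff)
  ultimately show ?thesis using s_pos by linarith
qed

lemma quot_v1_gt_s: "s < quot_v1"
proof -
  have "s < 2 * l / (l\<^sup>2 - 1)" using s_mult_l2_minus_1_less l2_minus_1_ge by (simp add: field_simps)
  thus ?thesis using quot_v1_ge by linarith
qed

lemma quot_v1_less_t: "quot_v1 < t"
proof -
  have "s < 2 * l / (l\<^sup>2 - 1)" using s_mult_l2_minus_1_less l2_minus_1_ge by (simp add: field_simps)
  also have "\<dots> \<le> real r1 * l / (l\<^sup>2 - 1)" using r1_ge2 l_pos l2_minus_1_ge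
    by (intro divide_right_mono mult_right_mono) auto
  finally show ?thesis unfolding quot_v1_eq by simp
qed

lemma quot_v1_pos: "0 < quot_v1"
  using quot_v1_gt_s s_pos by simp

lemma quot_v1path_eq: "quot_v1path r1 l k = cf_iter l quot_v1 k"
  unfolding quot_v1path_def quot_v1_def by simp

lemma quot_v1_less_step: "quot_v1 < cf_iter l quot_v1 1"
proof -
  have "quot_v1 * quot_v1 - l * quot_v1 + 1 < 0"
  proof -
    have "quot_v1 * quot_v1 - l * quot_v1 + 1 = (quot_v1 - s) * (quot_v1 - t)" using s_mult_t
      by (simp add: algebra_simps)
    moreover have "(quot_v1 - s) * (quot_v1 - t) < 0" using quot_v1_gt_s quot_v1_less_t
      by (simp add: mult_pos_neg)
    ultimately show ?thesis by simp
  qed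
  hence "1 / quot_v1 < l - quot_v1" using quot_v1_pos by (simp add: field_simps)
  thus ?thesis by simp
qed

lemma quot_v1path_gt_s: "s < quot_v1path r1 l k"
  unfolding quot_v1path_eq using cf_iter_gt_s quot_v1_gt_s by simp

lemma quot_v1path_pos: "0 < quot_v1path r1 l k"
  using quot_v1path_gt_s s_pos by (meson less_trans)

lemma quot_v1path_less_t: "quot_v1path r1 l k < t"
  unfolding quot_v1path_eq using cf_iter_less_t quot_v1_gt_s quot_v1_less_t by simp

lemma quot_v1path_increasing: "quot_v1path r1 l k < quot_v1path r1 l (Suc k)"
  unfolding quot_v1path_eq using cf_iter_increasing quot_v1_gt_s quot_v1_less_step by simp

lemma quot_v1path_mono: "k \<le> k' \<Longrightarrow> quot_v1path r1 l k \<le> quot_v1path r1 l k'"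
  unfolding quot_v1path_eq using cf_iter_mono_index quot_v1_gt_s quot_v1_less_step by simp

lemma inverse_quot_v1path_gt_s: "s < 1 / quot_v1path r1 l k"
proof -
  have "1 / t < 1 / quot_v1path r1 l k" using quot_v1path_less_t quot_v1path_pos
    by (simp add: frac_less2)
  thus ?thesis using one_div_t by simp
qed

abbreviation "w \<equiv> 2 * l / (l\<^sup>2 + 1)"

lemma inverse_quot_v1path_1_le: "1 / quot_v1path r1 l 1 \<le> w"
proof -
  have "quot_v1path r1 l 1 = l - 1 / quot_v1" unfolding quot_v1path_eq by simp
  moreover have "1 / quot_v1 \<le> (l\<^sup>2 - 1) / (2 * l)"
  proof -
    have p: "0 < 2 * l / (l\<^sup>2 - 1)" using l_pos l2_minus_1_ge by simp
    have "1 / quot_v1 \<le> 1 / (2 * l / (l\<^sup>2 - 1))"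
      by (rule divide_left_mono[OF quot_v1_ge _ mult_pos_pos[OF quot_v1_pos p]]) simp
    thus ?thesis by simp
  qed
  moreover have "l - (l\<^sup>2 - 1) / (2 * l) = (l\<^sup>2 + 1) / (2 * l)" using l_pos
    by (simp add: field_simps power2_eq_square)
  ultimately have ge: "(l\<^sup>2 + 1) / (2 * l) \<le> quot_v1path r1 l 1" by linarith
  have p: "0 < (l\<^sup>2 + 1) / (2 * l)" using l_pos by (simp add: add_pos_nonneg)
  have q: "0 < quot_v1path r1 l 1 * ((l\<^sup>2 + 1) / (2 * l))"
    by (rule mult_pos_pos[OF quot_v1path_pos p])
  have "1 / quot_v1path r1 l 1 \<le> 1 / ((l\<^sup>2 + 1) / (2 * l))"
    by (rule divide_left_mono[OF ge _ q]) simp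
  thus ?thesis by simp
qed

lemma inverse_quot_v1path_le: "1 \<le> k \<Longrightarrow> 1 / quot_v1path r1 l k \<le> w"
proof -
  assume "1 \<le> k"
  hence "quot_v1path r1 l 1 \<le> quot_v1path r1 l k" by (rule quot_v1path_mono)
  hence "1 / quot_v1path r1 l k \<le> 1 / quot_v1path r1 l 1" using quot_v1path_pos
    by (intro divide_left_mono) auto
  thus ?thesis using inverse_quot_v1path_1_le by linarith
qed

lemma w_le_sqrt_disc: "w \<le> sqrt (l\<^sup>2 - 4)"
proof -
  have "0 \<le> (l - 1)\<^sup>2" by simp
  hence "2 * l \<le> l\<^sup>2 + 1" unfolding power2_diff by simp
  moreover have "0 < l\<^sup>2 + 1" using zero_le_power2[of l] by linarith
  ultimately have w1: "w \<le> 1" by (simp add: pos_divide_le_eq)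
  have "1 \<le> sqrt (l\<^sup>2 - 4)" by (rule real_le_rsqrt) (use l2_ge5 in simp)
  thus ?thesis using w1 by linarith
qed

lemma s_plus_w_le_t: "s + w \<le> t"
  using w_le_sqrt_disc two_s by linarith

lemma quot_u_gt_s:
  assumes "2 \<le> q1"
  shows "s < quot_u r1 h q1 l"
proof -
  have "1 / quot_pendant l (h - 1) < s" by (rule inverse_quot_pendant_less_s)
  moreover have "1 / quot_v1path r1 l (q1 - 1) \<le> w" using assms
    by (intro inverse_quot_v1path_le) simp
  ultimately show ?thesis unfolding quot_u_def using s_plus_w_le_t by linarith
qed

lemma quot_u_less_l: "quot_u r1 h q1 l < l"
proof -
  have "0 < 1 / quot_pendant l (h - 1)" "0 < 1 / quot_v1path r1 l (q1 - 1)"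
    using quot_pendant_pos quot_v1path_pos by simp_all
  thus ?thesis unfolding quot_u_def by linarith
qed

lemma quot_v2path_gt_s: "2 \<le> q1 \<Longrightarrow> s < quot_v2path r1 h q1 l k"
  unfolding quot_v2path_def using cf_iter_gt_s quot_u_gt_s by simp

lemma quot_v2path_pos: "2 \<le> q1 \<Longrightarrow> 0 < quot_v2path r1 h q1 l k"
  using quot_v2path_gt_s s_pos
  by (meson less_trans)

lemma quot_v2path_less_l: "2 \<le> q1 \<Longrightarrow> quot_v2path r1 h q1 l k < l"
proof (cases k)
  case 0 thus ?thesis using quot_u_less_l unfolding quot_v2path_def by simp
next
  case (Suc j)
  assume q: "2 \<le> q1"
  have "0 < quot_v2path r1 h q1 l j" by (rule quot_v2path_pos[OF q])
  thus ?thesis unfolding Suc quot_v2path_def by simp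
qed

lemma quot_root_alpha_less:
  assumes "3 \<le> h" "2 \<le> q1" "2 \<le> q2"
  shows "quot_root r1 r2 h q1 q2 l < quot_root r1 r2 (h - 1) (q1 + 1) q2 l"
proof -
  have hh: "h - 1 = Suc (h - 2)" using assms(1) by simp
  have a: "quot_pendant l (h - 1) < quot_pendant l (h - 2)" unfolding hh
    by (rule quot_pendant_decreasing)
  hence a': "1 / quot_pendant l (h - 2) < 1 / quot_pendant l (h - 1)" using quot_pendant_pos
    by (simp add: frac_less2)
  have b: "quot_v1path r1 l (q1 - 1) < quot_v1path r1 l q1"
    using quot_v1path_increasing[of "q1 - 1"] assms(2) by simp
  hence b': "1 / quot_v1path r1 l q1 < 1 / quot_v1path r1 l (q1 - 1)" using quot_v1path_pos
    by (simp add: frac_less2)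
  have U: "quot_u r1 h q1 l < quot_u r1 (h - 1) (q1 + 1) l"
    unfolding quot_u_def using a' b' by (simp add: numeral_2_eq_2 diff_diff_left)
  have "quot_v2path r1 h q1 l (q2 - 1) < quot_v2path r1 (h - 1) (q1 + 1) l (q2 - 1)"
    unfolding quot_v2path_def by (rule cf_iter_strict_mono[OF quot_u_gt_s[OF assms(2)] U])
  hence "1 / quot_v2path r1 (h - 1) (q1 + 1) l (q2 - 1) < 1 / quot_v2path r1 h q1 l (q2 - 1)"
    using quot_v2path_pos[OF assms(2)] by (simp add: frac_less2)
  thus ?thesis unfolding quot_root_def by simp
qed

abbreviation "inv_pend1 \<equiv> l / (l\<^sup>2 - 1)"

lemma s_mult_3_l2_minus_1_le: "s * (3 * l\<^sup>2 - 1) \<le> l * (l\<^sup>2 - 1)"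
proof -
  define L where "L = l\<^sup>2"
  have L5: "5 \<le> L" using l2_ge5 unfolding L_def .
  define z where "z = l * (L + 1) / (3 * L - 1)"
  have den: "0 < 3 * L - 1" using L5 by simp
  have zpos: "0 \<le> z" unfolding z_def using l_pos den L5 by simp
  have poly: "L * (L + 1)\<^sup>2 \<le> (L - 4) * (3 * L - 1)\<^sup>2"
  proof -
    define d where "d = L - 5"
    have d: "0 \<le> d" "L = 5 + d" using L5 unfolding d_def by auto
    have "(L - 4) * (3 * L - 1)\<^sup>2 - L * (L + 1)\<^sup>2 = 16 + 184 * d + 76 * d\<^sup>2 + 8 * d ^ 3"
      unfolding d(2) by (simp add: power2_eq_square power3_eq_cube algebra_simps)
    also have "\<dots> \<ge> 0" using d(1) by simp
    finally show ?thesis by simp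
  qed
  have "z\<^sup>2 = L * (L + 1)\<^sup>2 / (3 * L - 1)\<^sup>2" unfolding z_def L_def
    by (simp add: power_divide power_mult_distrib)
  also have "\<dots> \<le> (L - 4)" using poly den by (simp add: divide_le_eq)
  finally have "z \<le> sqrt (l\<^sup>2 - 4)" unfolding L_def by (intro real_le_rsqrt)
  hence "2 * s \<le> l - z" using two_s by linarith
  moreover have "l - z = 2 * (l * (L - 1)) / (3 * L - 1)" unfolding z_def using den
    by (simp add: field_simps)
  ultimately have "s \<le> (l * (L - 1)) / (3 * L - 1)" by simp
  thus ?thesis using den unfolding L_def by (simp add: le_divide_eq mult.commute)
qed

lemma t_minus_w_mult_ge_1: "1 \<le> (t - w) * (inv_pend1 + s)"
proof -
  have L: "0 < l\<^sup>2 - 1" "0 < l\<^sup>2 + 1" using l2_minus_1_ge by simp_all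
  have ring: "(L - S - W) * (A + S) = S * (L - S) + (A * (L - W) - S * (A + W))" for L S W A :: real
    by (simp add: algebra_simps)
  have prod: "x / (L - 1) * (x - 2 * x / (L + 1)) = x * x / (L + 1)"
    if "0 < L - 1" "0 < L + 1" for L x :: real
  proof -
    have "x - 2 * x / (L + 1) = x * (L - 1) / (L + 1)" using that by (simp add: field_simps)
    thus ?thesis using that by simp
  qed
  have sum: "x / (L - 1) + 2 * x / (L + 1) = x * (3 * L - 1) / ((L - 1) * (L + 1))"
    if "0 < L - 1" "0 < L + 1" for L x :: real
    using that by (simp add: field_simps)
  have "s * (l * (3 * l\<^sup>2 - 1)) / ((l\<^sup>2 - 1) * (l\<^sup>2 + 1))
      \<le> l * (l * (l\<^sup>2 - 1)) / ((l\<^sup>2 - 1) * (l\<^sup>2 + 1))"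
    using s_mult_3_l2_minus_1_le l_pos L
    by (intro divide_right_mono) (simp_all add: mult_left_mono mult.left_commute)
  also have "\<dots> = inv_pend1 * (l - w)"
    using prod[OF L, of l] L(1) by (simp add: power2_eq_square)
  finally have "s * (inv_pend1 + w) \<le> inv_pend1 * (l - w)"
    using sum[OF L, of l] by simp
  thus ?thesis using ring[of l s w inv_pend1] s_mult_t by simp
qed

lemma quot_root_row_step_less:
  assumes "3 \<le> m" "2 \<le> q"
  shows "quot_root r1 r2 2 m q l < quot_root r1 r2 (m - 1) 2 (q + 1) l"
proof -
  define Q where "Q = quot_u r1 2 m l"
  define Q' where "Q' = quot_u r1 (m - 1) 2 l"
  have Q_eq: "Q = l - 1 / quot_pendant l 1 - 1 / quot_v1path r1 l (m - 1)"
    unfolding Q_def quot_u_def by simp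
  have Q'_eq: "Q' = l - 1 / quot_pendant l (m - 2) - 1 / quot_v1path r1 l 1"
    unfolding Q'_def quot_u_def by (simp add: numeral_2_eq_2)
  have tw_pos: "0 < t - w" using s_plus_w_le_t s_pos by linarith
  have tw_less: "t - w < Q'"
    using inverse_quot_pendant_less_s[of "m - 2"] inverse_quot_v1path_1_le unfolding Q'_eq
      by linarith
  have "1 / (t - w) \<le> inv_pend1 + s"
    using t_minus_w_mult_ge_1 tw_pos by (simp add: divide_le_eq mult.commute)
  moreover have "1 / Q' < 1 / (t - w)" using tw_less tw_pos by (simp add: frac_less2)
  moreover have "s < 1 / quot_v1path r1 l (m - 1)" by (rule inverse_quot_v1path_gt_s)
  \<comment> \<open>one step further towards \<open>v\<^sub>2\<close>, the quotient of \<open>[m - 1, 2, q + 1]\<close> already exceeds \<open>Q\<close>\<close>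
  ultimately have "Q < cf_iter l Q' 1" unfolding Q_eq quot_pendant_1 by simp
  moreover have "s < Q" unfolding Q_def using quot_u_gt_s assms(1) by simp
  ultimately have "cf_iter l Q (q - 1) < cf_iter l (cf_iter l Q' 1) (q - 1)"
    using cf_iter_strict_mono by blast
  also have "\<dots> = cf_iter l Q' q"
    using cf_iter_Suc_inner[of l Q' "q - 1"] assms(2) by simp
  finally have "quot_v2path r1 2 m l (q - 1) < quot_v2path r1 (m - 1) 2 l (q + 1 - 1)"
    unfolding quot_v2path_def Q_def Q'_def by simp
  hence "1 / quot_v2path r1 (m - 1) 2 l (q + 1 - 1) < 1 / quot_v2path r1 2 m l (q - 1)"
    using quot_v2path_pos[of m] quot_v2path_pos[of 2] assms by (simp add: frac_less2)
  thus ?thesis unfolding quot_root_def by simp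
qed

end

text \<open>\<open>\<surd>(r\<^sub>2 + 2)\<close> is the spectral radius of the spider at \<open>v\<^sub>2\<close> with \<open>r\<^sub>2 + 1\<close> legs of
  length 2, a proper subtree; there the root quotient is already negative.\<close>
lemma quot_root_neg:
  assumes q1: "2 \<le> q1" and q2: "2 \<le> q2" and lp: "large_param l r1"
    and l2: "l\<^sup>2 = real r2 + 2"
  shows "quot_root r1 r2 h q1 q2 l < 0"
proof -
  interpret large_param l r1 by (rule lp)
  have pend1_eq: "quot_pendant l 1 = (real r2 + 1) / l" using quot_pendant_1 l2 by simp
  have v2path_last: "quot_v2path r1 h q1 l (q2 - 1) = l - 1 / quot_v2path r1 h q1 l (q2 - 2)"
  proof -
    have "q2 - 1 = Suc (q2 - 2)" using q2 by simp
    thus ?thesis unfolding quot_v2path_def by simp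
  qed
  have "1 / l < 1 / quot_v2path r1 h q1 l (q2 - 2)"
    using quot_v2path_pos[OF q1] quot_v2path_less_l[OF q1] by (simp add: frac_less2)
  moreover have "quot_pendant l 1 = l - 1 / l" by (simp add: quot_pendant_def)
  ultimately have "quot_v2path r1 h q1 l (q2 - 1) < quot_pendant l 1" unfolding v2path_last by linarith
  hence "1 / quot_pendant l 1 < 1 / quot_v2path r1 h q1 l (q2 - 1)" using quot_v2path_pos[OF q1]
    by (simp add: frac_less2)
  moreover have "l - real r2 / quot_pendant l 1 - 1 / quot_pendant l 1 = 0"
    unfolding pend1_eq using l_pos by (simp add: field_simps)
  ultimately show ?thesis unfolding quot_root_def by linarith
qed

context tree_hqq
begin

lemma tree_quot_pos:
  assumes lp: "large_param l r1" and q: "2 \<le> q1"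
    and i: "i < nverts" "i \<noteq> v2"
  shows "0 < tree_quot l i"
proof -
  interpret L: large_param l r1 by (rule lp)
  have "L.s < quot_u r1 h q1 l" by (rule L.quot_u_gt_s[OF q])
  hence "0 < quot_u r1 h q1 l" using L.s_pos by linarith
  moreover have "\<And>k. 0 < quot_pendant l k" by (rule L.quot_pendant_pos)
  moreover have "\<And>k. 0 < quot_v1path r1 l k" by (rule L.quot_v1path_pos)
  moreover have "\<And>k. 0 < quot_v2path r1 h q1 l k" by (rule L.quot_v2path_pos[OF q])
  ultimately show ?thesis unfolding tree_quot_def using i by auto
qed

end

lemma rho_less_if_quot_root_less:
  fixes r1 r2 h q1 q2 h' q1' q2' :: nat
  assumes r: "2 \<le> r1" "r1 < r2" and T: "1 \<le> h" "2 \<le> q1" "2 \<le> q2"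
    and T': "1 \<le> h'" "2 \<le> q1'" "2 \<le> q2'"
    and cmp: "\<And>l. large_param l r1 \<Longrightarrow> quot_root r1 r2 h q1 q2 l < quot_root r1 r2 h' q1' q2' l"
  shows "rho r1 r2 (h', q1', q2') < rho r1 r2 (h, q1, q2)"
proof -
  interpret A: tree_hqq r1 r2 h q1 q2 using T by unfold_locales auto
  interpret B: tree_hqq r1 r2 h' q1' q2' using T' by unfold_locales auto
  define mu where "mu = sqrt (real r2 + 2)"
  have mu2: "mu\<^sup>2 = real r2 + 2" unfolding mu_def by simp
  have mu_pos: "0 < mu" unfolding mu_def by simp
  have large_param_above_mu: "large_param l r1" if l: "mu \<le> l" for l
  proof unfold_locales
    have "mu\<^sup>2 \<le> l\<^sup>2" using l mu_pos by (intro power_mono) auto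
    hence L: "real r2 + 2 \<le> l\<^sup>2" using mu2 by simp
    thus "5 \<le> l\<^sup>2" "real r1 + 3 \<le> l\<^sup>2" using r by linarith+
    show "2 \<le> r1" by (rule r(1))
    have "(2::real)\<^sup>2 < l\<^sup>2" using \<open>5 \<le> l\<^sup>2\<close> by simp
    thus "2 < l" using l mu_pos power_less_imp_less_base[of 2 2 l] by simp
  qed
  have "spectral_radius B.adj_mat < spectral_radius A.adj_mat"
  proof (rule spectral_radius_less_by_quotients[OF A.is_rooted_tree B.is_rooted_tree
        A.branch_quotients_tree_quot B.branch_quotients_tree_quot])
    fix l i assume "mu \<le> l" "i < 1 + h + q1 + q2 + 2 * (r1 + r2)" "i \<noteq> h + q1 + q2"
    thus "0 < A.tree_quot l i" using A.tree_quot_pos[OF large_param_above_mu T(2)] by blast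
  next
    fix l i assume "mu \<le> l" "i < 1 + h' + q1' + q2' + 2 * (r1 + r2)" "i \<noteq> h' + q1' + q2'"
    thus "0 < B.tree_quot l i" using B.tree_quot_pos[OF large_param_above_mu T'(2)] by blast
  next
    fix l assume "mu \<le> l" "A.tree_quot l (h + q1 + q2) = 0"
    thus "0 < B.tree_quot l (h' + q1' + q2')"
      using cmp[OF large_param_above_mu] A.tree_quot_root B.tree_quot_root by fastforce
  next
    have "quot_root r1 r2 h q1 q2 mu < 0"
      by (rule quot_root_neg[OF T(2) T(3) large_param_above_mu[OF order_refl] mu2])
    thus "A.tree_quot mu (h + q1 + q2) \<le> 0" using A.tree_quot_root by simp
  qed
  thus ?thesis unfolding rho_def A.tree_adj_eq_adj_mat B.tree_adj_eq_adj_mat .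
qed

lemma rho_alpha_less:
  assumes r: "2 \<le> r1" "r1 < r2" and "3 \<le> h" "2 \<le> q1" "2 \<le> q2"
  shows "rho r1 r2 (alpha (h, q1, q2)) < rho r1 r2 (h, q1, q2)"
  unfolding alpha_def prod.case
  by (rule rho_less_if_quot_root_less[OF r]) (use assms large_param.quot_root_alpha_less in auto)

lemma rho_row_step_less:
  assumes r: "2 \<le> r1" "r1 < r2" and "3 \<le> m" "2 \<le> q"
  shows "rho r1 r2 (m - 1, 2, q + 1) < rho r1 r2 (2, m, q)"
  by (rule rho_less_if_quot_root_less[OF r]) (use assms large_param.quot_root_row_step_less in auto)

lemma rho_less_same_q2:
  assumes r: "2 \<le> r1" "r1 < r2" and "2 \<le> h" "2 \<le> q1" "2 \<le> q2"
  shows "rho r1 r2 (h, q1 + d + 1, q2) < rho r1 r2 (h + d + 1, q1, q2)"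
  using assms(3)
proof (induction d arbitrary: h)
  case 0
  thus ?case using rho_alpha_less[OF r, of "h + 1" q1 q2] assms by (simp add: alpha_def)
next
  case (Suc d)
  have "rho r1 r2 (h, q1 + Suc d + 1, q2) < rho r1 r2 (h + 1, q1 + d + 1, q2)"
    using rho_alpha_less[OF r, of "h + 1" "q1 + d + 1" q2] Suc.prems assms by (simp add: alpha_def)
  also have "\<dots> < rho r1 r2 (h + 1 + d + 1, q1, q2)"
    using Suc.IH[of "h + 1"] Suc.prems by simp
  finally show ?case by simp
qed

lemma rho_le_same_q2:
  assumes r: "2 \<le> r1" "r1 < r2" and "2 \<le> h'" "2 \<le> q1" "q1 \<le> q1'" "2 \<le> q2"
    and "h' + q1' = h + q1"
  shows "rho r1 r2 (h', q1', q2) \<le> rho r1 r2 (h, q1, q2)"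
proof (cases "q1 = q1'")
  case False
  hence "q1' = q1 + (q1' - q1 - 1) + 1" "h = h' + (q1' - q1 - 1) + 1" using assms(5,7) by auto
  thus ?thesis using rho_less_same_q2[OF r assms(3,4,6), of "q1' - q1 - 1"] by simp
qed (use assms(7) in simp)

lemma rho_less_across_q2:
  assumes r: "2 \<le> r1" "r1 < r2" and "2 \<le> h" "2 \<le> q2"
  shows "rho r1 r2 (h, 2, q2 + d + 1) < rho r1 r2 (2, h + d + 1, q2)"
  using assms(3)
proof (induction d arbitrary: h)
  case 0
  thus ?case using rho_row_step_less[OF r, of "h + 1" q2] assms by simp
next
  case (Suc d)
  have "rho r1 r2 (h, 2, q2 + Suc d + 1) < rho r1 r2 (2, h + 1, q2 + d + 1)"
    using rho_row_step_less[OF r, of "h + 1" "q2 + d + 1"] Suc.prems assms by simp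
  also have "\<dots> \<le> rho r1 r2 (h + 1, 2, q2 + d + 1)"
    by (rule rho_le_same_q2[OF r]) (use Suc.prems assms in auto)
  also have "\<dots> < rho r1 r2 (2, h + 1 + d + 1, q2)"
    using Suc.IH[of "h + 1"] Suc.prems by simp
  finally show ?case by simp
qed

lemma rho_less_if_inv_lex_succ:
  assumes r: "2 \<le> r1" "r1 < r2"
    and t: "2 \<le> h" "2 \<le> q1" "2 \<le> q2" and t': "2 \<le> h'" "2 \<le> q1'" "2 \<le> q2'"
    and sum: "h + q1 + q2 = h' + q1' + q2'" and succ: "inv_lex_succ (h, q1, q2) (h', q1', q2')"
  shows "rho r1 r2 (h', q1', q2') < rho r1 r2 (h, q1, q2)"
proof (cases "q2 < q2'")
  case True
  define d where "d = q2' - q2 - 1"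
  have "rho r1 r2 (h', q1', q2') \<le> rho r1 r2 (h' + q1' - 2, 2, q2')"
    by (rule rho_le_same_q2[OF r]) (use t' in auto)
  also have "\<dots> < rho r1 r2 (2, h' + q1' - 2 + d + 1, q2)"
    using rho_less_across_q2[OF r _ t(3), of "h' + q1' - 2" d] True t' unfolding d_def by simp
  also have "\<dots> \<le> rho r1 r2 (h, q1, q2)"
    by (rule rho_le_same_q2[OF r]) (use t t' sum True in \<open>auto simp: d_def\<close>)
  finally show ?thesis .
next
  case False
  hence "q2' = q2" "q1 < q1'" using succ unfolding inv_lex_succ_def by auto
  hence "q1' = q1 + (q1' - q1 - 1) + 1" "h = h' + (q1' - q1 - 1) + 1" using sum by auto
  thus ?thesis using rho_less_same_q2[OF r t'(1) t(2,3), of "q1' - q1 - 1"] \<open>q2' = q2\<close> by simp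
qed

lemma funpow_gamma: "(gamma ^^ j) (a, b, c) = (a - j, b, c + j)"
  by (induction j) (auto simp: gamma_def)

lemma funpow_alpha: "(alpha ^^ k) (a, b, c) = (a - k, b + k, c)"
  by (induction k) (auto simp: alpha_def)

definition seqA_row :: "nat \<Rightarrow> nat \<Rightarrow> (nat \<times> nat \<times> nat) list" where
  "seqA_row h0 j = map (\<lambda>k. (h0 - j - k, 2 + k, 2 + j)) [0..<h0 - 1 - j]"

lemma seqA_eq_concat: "seqA h0 = concat (map (seqA_row h0) [0..<h0 - 1])"
  unfolding seqA_def seqA_row_def by (simp add: funpow_alpha funpow_gamma algebra_simps)

lemma set_seqA: "set (seqA h0) = {(h0 - j - k, 2 + k, 2 + j) | j k. j < h0 - 1 \<and> k < h0 - 1 - j}"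
  unfolding seqA_eq_concat seqA_row_def by auto

lemma sorted_seqA_rows: "sorted_wrt inv_lex_succ (concat (map (seqA_row h0) [0..<m]))"
proof (induction m)
  case 0 thus ?case by simp
next
  case (Suc m)
  have r: "sorted_wrt inv_lex_succ (seqA_row h0 m)"
    unfolding seqA_row_def sorted_wrt_map
    by (rule sorted_wrt_mono_rel[OF _ sorted_wrt_upt[of 0 "h0 - 1 - m"]])
      (auto simp: inv_lex_succ_def)
  have c: "\<forall>x\<in>set (concat (map (seqA_row h0) [0..<m])). \<forall>y\<in>set (seqA_row h0 m). inv_lex_succ x y"
    unfolding seqA_row_def by (auto simp: inv_lex_succ_def)
  show ?case using Suc.IH r c by (simp add: sorted_wrt_append)
qed

lemma seqA_sorted: "sorted_wrt inv_lex_succ (seqA h0)"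
  unfolding seqA_eq_concat by (rule sorted_seqA_rows)

lemma inv_lex_succ_irrefl: "\<not> inv_lex_succ t t"
  by (cases t) (auto simp: inv_lex_succ_def)

lemma distinct_if_sorted_wrt_irrefl:
  "sorted_wrt R xs \<Longrightarrow> (\<And>x. \<not> R x x) \<Longrightarrow> distinct xs"
  by (induction xs) auto

lemma seqA_distinct: "distinct (seqA h0)"
  using seqA_sorted inv_lex_succ_irrefl by (rule distinct_if_sorted_wrt_irrefl)

lemma seqA_last:
  assumes "2 \<le> h0"
  shows "last (seqA h0) = (2, 2, h0)"
proof -
  have u: "[0..<h0 - 1] = [0..<h0 - 2] @ [h0 - 2]" using assms
    by (metis Suc_diff_Suc Suc_1 diff_Suc_eq_diff_pred less_le_trans lessI upt_Suc_append zero_le)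
  have "seqA_row h0 (h0 - 2) = [(2, 2, h0)]" unfolding seqA_row_def using assms
    by (simp add: upt_rec)
  thus ?thesis unfolding seqA_eq_concat u by simp
qed

lemma mem_family_iff:
  "(h, q1, q2) \<in> family r1 r2 n \<longleftrightarrow>
     2 \<le> h \<and> 2 \<le> q1 \<and> 2 \<le> q2 \<and> h + q1 + q2 + 1 + 2 * (r1 + r2) = n"
  unfolding family_def by auto

lemma finite_family: "finite (family r1 r2 n)"
proof (rule finite_subset)
  show "family r1 r2 n \<subseteq> {..n} \<times> {..n} \<times> {..n}" by (auto simp: mem_family_iff)
qed simp

lemma rho_less_if_inv_lex_succ_family:
  assumes "2 \<le> r1" "r1 < r2" and "t \<in> family r1 r2 n" "t' \<in> family r1 r2 n" "inv_lex_succ t t'"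
  shows "rho r1 r2 t' < rho r1 r2 t"
  using assms rho_less_if_inv_lex_succ[OF assms(1,2)]
  by (cases t, cases t') (auto simp: mem_family_iff)

lemma Max_image_eqI:
  fixes f :: "'a \<Rightarrow> 'b::linorder"
  assumes "finite A" "a \<in> A" "\<And>b. b \<in> A \<Longrightarrow> b \<noteq> a \<Longrightarrow> f b < f a"
  shows "f a = Max (f ` A)"
  using assms by (intro Max_eqI[symmetric]) (auto intro: less_imp_le)

lemma Min_image_eqI:
  fixes f :: "'a \<Rightarrow> 'b::linorder"
  assumes "finite A" "a \<in> A" "\<And>b. b \<in> A \<Longrightarrow> b \<noteq> a \<Longrightarrow> f a < f b"
  shows "f a = Min (f ` A)"
  using assms by (intro Min_eqI[symmetric]) (auto intro: less_imp_le)

context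
  fixes r1 r2 n h0 :: nat
  assumes h0: "int h0 = int n - 5 - 2 * (int r1 + int r2)" and h0_ge: "2 \<le> h0"
begin

lemma mem_family_iff_h0:
  "(h, q1, q2) \<in> family r1 r2 n \<longleftrightarrow> 2 \<le> h \<and> 2 \<le> q1 \<and> 2 \<le> q2 \<and> h + q1 + q2 = h0 + 4"
  using h0 unfolding family_def by auto

lemma set_seqA_eq_family: "set (seqA h0) = family r1 r2 n"
proof (intro Set.set_eqI iffI)
  fix t assume "t \<in> set (seqA h0)"
  thus "t \<in> family r1 r2 n" unfolding set_seqA using mem_family_iff_h0 by auto
next
  fix t assume t: "t \<in> family r1 r2 n"
  obtain h q1 q2 where t_eq: "t = (h, q1, q2)" by (cases t)
  have "2 \<le> h" "2 \<le> q1" "2 \<le> q2" "h + q1 + q2 = h0 + 4" using t mem_family_iff_h0 t_eq by auto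
  thus "t \<in> set (seqA h0)" unfolding set_seqA t_eq
    by (intro CollectI exI[of _ "q2 - 2"] exI[of _ "q1 - 2"]) auto
qed

lemma top_in_family: "(h0, 2, 2) \<in> family r1 r2 n"
  using h0_ge by (simp add: mem_family_iff_h0)

lemma bottom_in_family: "(2, 2, h0) \<in> family r1 r2 n"
  using h0_ge by (simp add: mem_family_iff_h0)

lemma inv_lex_succ_top: "t \<in> family r1 r2 n \<Longrightarrow> t \<noteq> (h0, 2, 2) \<Longrightarrow> inv_lex_succ (h0, 2, 2) t"
  by (cases t) (auto simp: mem_family_iff_h0 inv_lex_succ_def)

lemma inv_lex_succ_bottom: "t \<in> family r1 r2 n \<Longrightarrow> t \<noteq> (2, 2, h0) \<Longrightarrow> inv_lex_succ t (2, 2, h0)"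
  by (cases t) (auto simp: mem_family_iff_h0 inv_lex_succ_def)

end

theorem theorem5p3:
  fixes r1 r2 n h0 :: nat
  assumes "2 \<le> r1" and "r1 < r2"
    and "int h0 = int n - 5 - 2 * (int r1 + int r2)" and "2 \<le> h0"
  shows "(h0, 2, 2) \<in> family r1 r2 n \<and> (2, 2, h0) \<in> family r1 r2 n
    \<and> set (seqA h0) = family r1 r2 n \<and> distinct (seqA h0) \<and> last (seqA h0) = (2, 2, h0)
    \<and> (\<forall>i j. i < j \<and> j < length (seqA h0) \<longrightarrow> inv_lex_succ (seqA h0 ! i) (seqA h0 ! j))
    \<and> (\<forall>t\<in>family r1 r2 n. \<forall>t'\<in>family r1 r2 n.
          inv_lex_succ t t' \<longrightarrow> rho r1 r2 t > rho r1 r2 t')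
    \<and> rho r1 r2 (h0, 2, 2) = Max (rho r1 r2 ` family r1 r2 n)
    \<and> rho r1 r2 (2, 2, h0) = Min (rho r1 r2 ` family r1 r2 n)"
proof -
  note r = assms(1,2) and h0 = assms(3,4)
  note rho_less = rho_less_if_inv_lex_succ_family[OF r]
  have "rho r1 r2 (h0, 2, 2) = Max (rho r1 r2 ` family r1 r2 n)"
    by (rule Max_image_eqI[OF finite_family top_in_family[OF h0]])
       (use rho_less top_in_family[OF h0] inv_lex_succ_top[OF h0] in blast)
  moreover have "rho r1 r2 (2, 2, h0) = Min (rho r1 r2 ` family r1 r2 n)"
    by (rule Min_image_eqI[OF finite_family bottom_in_family[OF h0]])
       (use rho_less bottom_in_family[OF h0] inv_lex_succ_bottom[OF h0] in blast)
  moreover have "\<forall>i j. i < j \<and> j < length (seqA h0) \<longrightarrow> inv_lex_succ (seqA h0 ! i) (seqA h0 ! j)"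
    using seqA_sorted sorted_wrt_nth_less by blast
  ultimately show ?thesis
    using top_in_family[OF h0] bottom_in_family[OF h0] set_seqA_eq_family[OF h0] seqA_distinct
      seqA_last[OF assms(4)] rho_less by blast
qed

end
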